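(* The maps $\partial_{l-k}:\mathcal M_{l-k}\to\mathcal M_{l-k-1}$ are homomorphisms of $\mathbb Z[W]$-modules and satisfy $\partial_{l-k-1}\circ\partial_{l-k}=0$; thus $(\mathcal M_*,\partial)$ is a chain complex of $\mathbb Z[W]$-modules.
   Context: Let $\mathfrak g$ be a real split semisimple Lie algebra of rank $l$ with simple roots $\Pi=\{\alpha_1,\dots,\alpha_l\}$, Cartan matrix $C_{i,j}=\alpha_i(h_{\alpha_j})$ ($h_{\alpha_j}$ coroots), Weyl group $W$. For $S\subset\Pi$ let $W_S$ be generated by $s_\alpha$, $\alpha\in S$, and $\mathbb D(S)$ the set of functions $\eta:S\to\{\pm1\}$. For $\alpha_i\in S$ let $(s_{\alpha_i}\eta)(\alpha_j)=\eta(\alpha_j)\eta(\alpha_i)^{-C_{j,i}}$ ($\alpha_j\in S$) and $r_i=|\{\alpha_j\in\Pi\setminus S:C_{j,i}\text{ odd}\}|$; the free abelian group $\mathbb Z[\mathbb D(S)]$ is a $\mathbb Z[W_S]$-module with $s_{\alpha_i}\cdot\eta=\eta(\alpha_i)^{r_i}(s_{\alpha_i}\eta)$. Put $\mathcal M(S)=\mathbb Z[W]\otimes_{\mathbb Z[W_S]}\mathbb Z[\mathbb D(S)]$, with $\mathbb Z$-basis $w^\bullet\otimes\eta$ ($w^\bullet$ minimal-length representatives of $W/W_S$, $\eta\in\mathbb D(S)$), and $\mathcal M_{l-k}=\bigoplus_{|S|=k}\mathcal M(S)$. For $\eta\in\mathbb D(S)$ with $\Pi\setminus S=\{\alpha_{i_1},\dots,\alpha_{i_m}\}$,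 $i_1<\dots<i_m$, and $c\in\{1,2\}$, $\partial_{j,c}\eta\in\mathbb D(S\cup\{\alpha_{i_j}\})$ extends $\eta$ by $\alpha_{i_j}\mapsto-1$ if $c=1$, $+1$ if $c=2$. Define $\partial_{l-k}(w^\bullet\otimes\eta)=\sum_{j=1}^{l-k}\sum_{c=1}^2(-1)^{j+c+1}w^\bullet\otimes\partial_{j,c}\eta$, the $(j,c)$ term in $\mathcal M(S\cup\{\alpha_{i_j}\})$, extended $\mathbb Z$-linearly. *)

theory Defs
  imports Complex_Main "Jordan_Normal_Form.Matrix" "HOL-Library.FuncSet"
begin

text \<open>Simple roots are indexed by 0,...,l-1 (alpha_(i+1) in the paper is index i).
  C i j = alpha_i(h_alpha_j).  The hypothesis that C is the Cartan matrix of a real split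
  semisimple Lie algebra is expressed by the classical (Serre) characterisation:
  C is a symmetrisable generalised Cartan matrix whose symmetrisation is positive definite.\<close>

definition cartan_finite_type :: "nat \<Rightarrow> (nat \<Rightarrow> nat \<Rightarrow> int) \<Rightarrow> bool" where
  "cartan_finite_type l C \<longleftrightarrow>
     (\<forall>i<l. C i i = 2) \<and> (\<forall>i<l. \<forall>j<l. i \<noteq> j \<longrightarrow> C i j \<le> 0) \<and>
     (\<forall>i<l. \<forall>j<l. C i j = 0 \<longleftrightarrow> C j i = 0) \<and>
     (\<exists>e::nat \<Rightarrow> real. (\<forall>i<l. e i > 0) \<and>
        (\<forall>i<l. \<forall>j<l. of_int (C i j) * e j = of_int (C j i) * e i) \<and>
        (\<forall>x::nat \<Rightarrow> real. (\<exists>i<l. x i \<noteq> 0) \<longrightarrow>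
            (\<Sum>i<l. \<Sum>j<l. x i * (of_int (C i j) * e j) * x j) > 0))"

text \<open>Simple reflection s_i acting on the root lattice Z^l (coordinates w.r.t. simple roots):
  s_i(alpha_j) = alpha_j - C j i * alpha_i; column j is the image of alpha_j.\<close>
definition srefl :: "nat \<Rightarrow> (nat \<Rightarrow> nat \<Rightarrow> int) \<Rightarrow> nat \<Rightarrow> int mat" where
  "srefl l C i = mat l l (\<lambda>(k, j). (if k = j then 1 else 0) - (if k = i then C j i else 0))"

definition word_prod :: "nat \<Rightarrow> (nat \<Rightarrow> nat \<Rightarrow> int) \<Rightarrow> nat list \<Rightarrow> int mat" where
  "word_prod l C ws = foldr (\<lambda>i m. srefl l C i * m) ws (1\<^sub>m l)"

text \<open>W_S: the subgroup generated by s_i, i in S (monoid closure = group closure, as s_i^2 = 1).\<close>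
definition weyl_sub :: "nat \<Rightarrow> (nat \<Rightarrow> nat \<Rightarrow> int) \<Rightarrow> nat set \<Rightarrow> int mat set" where
  "weyl_sub l C S = {word_prod l C ws | ws. set ws \<subseteq> S}"

abbreviation weyl :: "nat \<Rightarrow> (nat \<Rightarrow> nat \<Rightarrow> int) \<Rightarrow> int mat set" where
  "weyl l C \<equiv> weyl_sub l C {..<l}"

definition wlen :: "nat \<Rightarrow> (nat \<Rightarrow> nat \<Rightarrow> int) \<Rightarrow> int mat \<Rightarrow> nat" where
  "wlen l C w = (LEAST n. \<exists>ws. set ws \<subseteq> {..<l} \<and> length ws = n \<and> word_prod l C ws = w)"

definition min_rep :: "nat \<Rightarrow> (nat \<Rightarrow> nat \<Rightarrow> int) \<Rightarrow> nat set \<Rightarrow> int mat \<Rightarrow> bool" where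
  "min_rep l C S u \<longleftrightarrow> u \<in> weyl l C \<and> (\<forall>v \<in> weyl_sub l C S. wlen l C u \<le> wlen l C (u * v))"

definition coset_rep :: "nat \<Rightarrow> (nat \<Rightarrow> nat \<Rightarrow> int) \<Rightarrow> nat set \<Rightarrow> int mat \<Rightarrow> int mat" where
  "coset_rep l C S w = (THE u. min_rep l C S u \<and> (\<exists>v \<in> weyl_sub l C S. w = u * v))"

definition coset_part :: "nat \<Rightarrow> (nat \<Rightarrow> nat \<Rightarrow> int) \<Rightarrow> nat set \<Rightarrow> int mat \<Rightarrow> int mat" where
  "coset_part l C S w = (THE v. v \<in> weyl_sub l C S \<and> w = coset_rep l C S w * v)"

definition dset :: "nat set \<Rightarrow> (nat \<Rightarrow> int) set" where
  "dset S = S \<rightarrow>\<^sub>E {-1, 1}"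

text \<open>(s_i eta)(alpha_j) = eta(alpha_j) * eta(alpha_i)^(-C j i); since eta(alpha_i) = +-1,
  the power with exponent -C j i equals the power with exponent |C j i|.\<close>
definition sfun :: "(nat \<Rightarrow> nat \<Rightarrow> int) \<Rightarrow> nat set \<Rightarrow> nat \<Rightarrow> (nat \<Rightarrow> int) \<Rightarrow> (nat \<Rightarrow> int)" where
  "sfun C S i \<eta> = (\<lambda>j. if j \<in> S then \<eta> j * \<eta> i ^ nat \<bar>C j i\<bar> else undefined)"

definition rcount :: "nat \<Rightarrow> (nat \<Rightarrow> nat \<Rightarrow> int) \<Rightarrow> nat set \<Rightarrow> nat \<Rightarrow> nat" where
  "rcount l C S i = card {j \<in> {..<l} - S. odd (C j i)}"

text \<open>Action of a generator s_i (i in S) on signed basis elements (e, eta) = e * eta of Z[D(S)]: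
  s_i . eta = eta(alpha_i)^(r_i) (s_i eta).\<close>
definition sact :: "nat \<Rightarrow> (nat \<Rightarrow> nat \<Rightarrow> int) \<Rightarrow> nat set \<Rightarrow> nat \<Rightarrow> int \<times> (nat \<Rightarrow> int) \<Rightarrow> int \<times> (nat \<Rightarrow> int)" where
  "sact l C S i p = (case p of (e, \<eta>) \<Rightarrow> (e * \<eta> i ^ rcount l C S i, sfun C S i \<eta>))"

definition word_act :: "nat \<Rightarrow> (nat \<Rightarrow> nat \<Rightarrow> int) \<Rightarrow> nat set \<Rightarrow> nat list \<Rightarrow> (nat \<Rightarrow> int) \<Rightarrow> int \<times> (nat \<Rightarrow> int)" where
  "word_act l C S ws \<eta> = foldr (sact l C S) ws (1, \<eta>)"

definition wsact :: "nat \<Rightarrow> (nat \<Rightarrow> nat \<Rightarrow> int) \<Rightarrow> nat set \<Rightarrow> int mat \<Rightarrow> (nat \<Rightarrow> int) \<Rightarrow> int \<times> (nat \<Rightarrow> int)" where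
  "wsact l C S v \<eta> = word_act l C S (SOME ws. set ws \<subseteq> S \<and> word_prod l C ws = v) \<eta>"

text \<open>Chains: Z-valued functions on cells (S, w^bullet, eta); the basis element
  w^bullet (x) eta of M(S) is the indicator of the cell.\<close>
type_synonym cell = "nat set \<times> int mat \<times> (nat \<Rightarrow> int)"
type_synonym chain = "cell \<Rightarrow> int"

text \<open>The element w (x) eta of M(S) = Z[W] (x)_{Z[W_S]} Z[D(S)], for arbitrary w in W,
  written in the basis: w = u v, u minimal, v in W_S, so w (x) eta = u (x) (v . eta).\<close>
definition tens :: "nat \<Rightarrow> (nat \<Rightarrow> nat \<Rightarrow> int) \<Rightarrow> nat set \<Rightarrow> int mat \<Rightarrow> (nat \<Rightarrow> int) \<Rightarrow> chain" where
  "tens l C S w \<eta> = (case wsact l C S (coset_part l C S w) \<eta> of (e, \<eta>') \<Rightarrow>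
      (\<lambda>x. if x = (S, coset_rep l C S w, \<eta>') then e else 0))"

text \<open>Basis of M_{l-k} = direct sum over |S| = k of M(S).\<close>
definition basis :: "nat \<Rightarrow> (nat \<Rightarrow> nat \<Rightarrow> int) \<Rightarrow> nat \<Rightarrow> cell set" where
  "basis l C k = {(S, u, \<eta>). S \<subseteq> {..<l} \<and> card S = k \<and> min_rep l C S u \<and> \<eta> \<in> dset S}"

text \<open>Mod l C k is M_{l-k} (chains supported on cells with |S| = k).\<close>
definition Mod :: "nat \<Rightarrow> (nat \<Rightarrow> nat \<Rightarrow> int) \<Rightarrow> nat \<Rightarrow> chain set" where
  "Mod l C k = {f. \<forall>x. x \<notin> basis l C k \<longrightarrow> f x = 0}"

definition linext :: "(cell \<Rightarrow> chain) \<Rightarrow> chain \<Rightarrow> chain" where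
  "linext F f = (\<lambda>y. \<Sum>x \<in> {x. f x \<noteq> 0}. f x * F x y)"

definition wmult :: "nat \<Rightarrow> (nat \<Rightarrow> nat \<Rightarrow> int) \<Rightarrow> int mat \<Rightarrow> chain \<Rightarrow> chain" where
  "wmult l C g f = linext (\<lambda>(S, u, \<eta>). tens l C S (g * u) \<eta>) f"

text \<open>The complement of S is listed increasingly as cs;
  list index j corresponds to the paper's index j+1, so the sign (-1)^(j+c+1) becomes
  (-1)^((j+1)+c+1).  c = 1 extends by -1, c = 2 by +1.\<close>
definition bd_cell :: "nat \<Rightarrow> (nat \<Rightarrow> nat \<Rightarrow> int) \<Rightarrow> cell \<Rightarrow> chain" where
  "bd_cell l C x = (case x of (S, u, \<eta>) \<Rightarrow>
     (let cs = sorted_list_of_set ({..<l} - S) in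
      (\<lambda>y. \<Sum>j<length cs. \<Sum>c\<in>{1::nat, 2}.
          (-1) ^ ((j + 1) + c + 1) *
          tens l C (insert (cs ! j) S) u (\<eta>(cs ! j := (if c = 1 then -1 else 1))) y)))"

definition bd :: "nat \<Rightarrow> (nat \<Rightarrow> nat \<Rightarrow> int) \<Rightarrow> chain \<Rightarrow> chain" where
  "bd l C f = linext (bd_cell l C) f"

end

theory Submission
  imports Defs "Jordan_Normal_Form.Determinant" "HOL-Analysis.Function_Topology"
begin

text \<open>The boundary of a cell \<open>u \<otimes> \<eta>\<close> adds one simple root \<open>a \<notin> S\<close> to \<open>S\<close>, with either sign.
  \<open>\<partial>\<partial> = 0\<close> because adding \<open>a\<close> and then \<open>b\<close> gives the same cell as adding \<open>b\<close> and then \<open>a\<close>, with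
  the opposite sign. \<open>W\<close>-equivariance holds because the boundary formula is valid for every
  \<open>w \<otimes> \<eta>\<close>, not only for minimal coset representatives: writing \<open>w = u v\<close> with \<open>v \<in> W\<^sub>S\<close>, extending
  \<open>\<eta>\<close> at \<open>a\<close> commutes with the twisted action of \<open>v\<close> up to a sign \<open>\<tau> = \<plusminus>1\<close> that does not depend
  on the new value, and \<open>\<tau> = -1\<close> only swaps the two extensions, which carry opposite signs. The
  twisted action is given by a closed formula in the entries of \<open>v\<^sup>-\<^sup>1\<close>, so it does not depend on
  the word chosen for \<open>v\<close>.

  The decomposition \<open>w = u v\<close> is unique, by Tits'
  lemma (an ascent \<open>s\<close> of \<open>w\<close> maps \<open>\<alpha>\<^sub>s\<close> to a nonnegative combination of simple roots), which
  reduces to rank two, where finite type forces \<open>C\<^sub>s\<^sub>t C\<^sub>t\<^sub>s \<le> 3\<close> and hence the braid relations.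
  And \<open>W\<close> is finite, since it preserves a positive definite quadratic form and therefore maps
  simple roots into a bounded set of integer vectors; so chains are finite sums.\<close>

section \<open>Words in the simple reflections\<close>

locale simple_reflections =
  fixes l :: nat and C :: "nat \<Rightarrow> nat \<Rightarrow> int"
begin

lemma srefl_carrier [simp]: "srefl l C i \<in> carrier_mat l l"
  unfolding srefl_def by simp

lemma srefl_dim [simp]: "dim_row (srefl l C i) = l" "dim_col (srefl l C i) = l"
  unfolding srefl_def by simp_all

lemma srefl_index: "k < l \<Longrightarrow> j < l \<Longrightarrow>
  srefl l C i $$ (k, j) = (if k = j then 1 else 0) - (if k = i then C j i else 0)"
  unfolding srefl_def by simp

lemma word_prod_Nil [simp]: "word_prod l C [] = 1\<^sub>m l"
  unfolding word_prod_def by simp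

lemma word_prod_Cons [simp]: "word_prod l C (i # ws) = srefl l C i * word_prod l C ws"
  unfolding word_prod_def by simp

lemma word_prod_carrier [simp]: "word_prod l C ws \<in> carrier_mat l l"
  by (induction ws) auto

lemma word_prod_dim [simp]: "dim_row (word_prod l C ws) = l" "dim_col (word_prod l C ws) = l"
  using carrier_matD[OF word_prod_carrier[of ws]] by auto

lemma word_prod_append: "word_prod l C (xs @ ys) = word_prod l C xs * word_prod l C ys"
  by (induction xs) (simp_all add: assoc_mult_mat[of _ l l _ l _ l])

lemma index_mult_lessThan: "A \<in> carrier_mat l l \<Longrightarrow> B \<in> carrier_mat l l \<Longrightarrow> k < l \<Longrightarrow> j < l \<Longrightarrow>
  (A * B) $$ (k, j) = (\<Sum>m<l. A $$ (k, m) * B $$ (m, j))"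
  by (auto simp: scalar_prod_def lessThan_atLeast0 intro!: sum.cong)

lemma index_mult_srefl:
  assumes "M \<in> carrier_mat l l" "k < l" "j < l" "i < l"
  shows "(M * srefl l C i) $$ (k, j) = M $$ (k, j) - M $$ (k, i) * C j i"
proof -
  have "(M * srefl l C i) $$ (k, j)
      = (\<Sum>m<l. (if m = j then M $$ (k, m) else 0) - (if m = i then M $$ (k, m) * C j i else 0))"
    using assms by (simp del: index_mult_mat add: index_mult_lessThan srefl_index
        right_diff_distrib if_distrib[of "\<lambda>x. _ * x"] cong: if_cong)
  also have "\<dots> = M $$ (k, j) - M $$ (k, i) * C j i"
    using assms by (simp add: sum_subtractf)
  finally show ?thesis .
qed

lemma index_srefl_mult:
  assumes "M \<in> carrier_mat l l" "k < l" "j < l" "i < l"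
  shows "(srefl l C i * M) $$ (k, j) = M $$ (k, j) - (if k = i then (\<Sum>m<l. C m i * M $$ (m, j)) else 0)"
proof -
  have "(srefl l C i * M) $$ (k, j)
      = (\<Sum>m<l. (if k = m then M $$ (m, j) else 0) - (if k = i then C m i * M $$ (m, j) else 0))"
    using assms by (simp del: index_mult_mat add: index_mult_lessThan srefl_index
        left_diff_distrib if_distrib[of "\<lambda>x. x * _"] cong: if_cong)
  also have "\<dots> = M $$ (k, j) - (if k = i then (\<Sum>m<l. C m i * M $$ (m, j)) else 0)"
    using assms by (simp add: sum_subtractf)
  finally show ?thesis .
qed

lemma weyl_subI: "set ws \<subseteq> S \<Longrightarrow> word_prod l C ws \<in> weyl_sub l C S"
  unfolding weyl_sub_def by blast

lemma weyl_subE: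
  assumes "w \<in> weyl_sub l C S"
  obtains ws where "set ws \<subseteq> S" "word_prod l C ws = w"
  using assms unfolding weyl_sub_def by blast

lemma weyl_sub_carrier: "w \<in> weyl_sub l C S \<Longrightarrow> w \<in> carrier_mat l l"
  by (auto elim: weyl_subE)

lemma weyl_sub_one: "1\<^sub>m l \<in> weyl_sub l C S"
  using weyl_subI[of "[]" S] by simp

lemma weyl_sub_srefl: "i \<in> S \<Longrightarrow> srefl l C i \<in> weyl_sub l C S"
  using weyl_subI[of "[i]" S] by simp

lemma weyl_sub_mult: "a \<in> weyl_sub l C S \<Longrightarrow> b \<in> weyl_sub l C S \<Longrightarrow> a * b \<in> weyl_sub l C S"
  by (metis weyl_subE weyl_subI word_prod_append set_append Un_least)

lemma weyl_sub_mono: "S \<subseteq> T \<Longrightarrow> weyl_sub l C S \<subseteq> weyl_sub l C T"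
  unfolding weyl_sub_def by blast

lemma weyl_sub_index_outside:
  assumes "w \<in> weyl_sub l C S" "k < l" "j < l" "k \<notin> S" "S \<subseteq> {..<l}"
  shows "w $$ (k, j) = (if k = j then 1 else 0)"
proof -
  obtain ws where ws: "set ws \<subseteq> S" "word_prod l C ws = w"
    using assms weyl_subE by blast
  have "word_prod l C ws $$ (k, j) = (if k = j then 1 else 0)"
    using ws(1)
  proof (induction ws)
    case (Cons i ws)
    then have "k \<noteq> i" "i < l" using assms by auto
    then show ?case using Cons assms
      by (simp add: index_srefl_mult[OF word_prod_carrier] del: index_mult_mat)
  qed (use assms in simp)
  then show ?thesis using ws(2) by simp
qed

definition len_in :: "nat set \<Rightarrow> int mat \<Rightarrow> nat" where
  "len_in S w = (LEAST n. \<exists>ws. set ws \<subseteq> S \<and> length ws = n \<and> word_prod l C ws = w)"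

lemma wlen_eq_len_in: "wlen l C w = len_in {..<l} w"
  unfolding wlen_def len_in_def ..

lemma reduced_word_exists:
  assumes "w \<in> weyl_sub l C S"
  obtains ws where "set ws \<subseteq> S" "length ws = len_in S w" "word_prod l C ws = w"
proof -
  have "\<exists>n ws. set ws \<subseteq> S \<and> length ws = n \<and> word_prod l C ws = w"
    using assms by (auto elim: weyl_subE)
  then have "\<exists>ws. set ws \<subseteq> S \<and> length ws = len_in S w \<and> word_prod l C ws = w"
    unfolding len_in_def by (rule LeastI_ex)
  then show ?thesis using that by blast
qed

lemma len_in_le_length: "set ws \<subseteq> S \<Longrightarrow> len_in S (word_prod l C ws) \<le> length ws"
  unfolding len_in_def by (rule Least_le) blast

lemma len_in_mult:
  assumes "a \<in> weyl_sub l C S" "b \<in> weyl_sub l C S"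
  shows "len_in S (a * b) \<le> len_in S a + len_in S b"
proof -
  obtain as where as: "set as \<subseteq> S" "length as = len_in S a" "word_prod l C as = a"
    using assms reduced_word_exists by blast
  obtain bs where bs: "set bs \<subseteq> S" "length bs = len_in S b" "word_prod l C bs = b"
    using assms reduced_word_exists by blast
  have "len_in S (word_prod l C (as @ bs)) \<le> length (as @ bs)"
    using as bs by (intro len_in_le_length) auto
  then show ?thesis using as bs by (simp add: word_prod_append)
qed

lemma len_in_srefl_le: "i \<in> S \<Longrightarrow> len_in S (srefl l C i) \<le> 1"
  using len_in_le_length[of "[i]" S] by simp

lemma len_in_eq_0: "w \<in> weyl_sub l C S \<Longrightarrow> len_in S w = 0 \<Longrightarrow> w = 1\<^sub>m l"
  by (metis reduced_word_exists length_0_conv word_prod_Nil)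

lemma len_in_mono:
  assumes "S \<subseteq> T" "w \<in> weyl_sub l C S"
  shows "len_in T w \<le> len_in S w"
  by (metis assms reduced_word_exists len_in_le_length order_trans)

lemma len_in_butlast:
  assumes "set ws \<subseteq> S" "ws \<noteq> []"
  shows "len_in S (word_prod l C (butlast ws)) \<le> length ws - 1"
  using assms len_in_le_length[of "butlast ws" S] in_set_butlastD by fastforce

end

locale cartan = simple_reflections +
  assumes finite_type: "cartan_finite_type l C"
begin

lemma C_diag: "i < l \<Longrightarrow> C i i = 2"
  using finite_type unfolding cartan_finite_type_def by blast

lemma C_offdiag_nonpos: "i < l \<Longrightarrow> j < l \<Longrightarrow> i \<noteq> j \<Longrightarrow> C i j \<le> 0"
  using finite_type unfolding cartan_finite_type_def by blast

lemma C_eq_0_sym: "i < l \<Longrightarrow> j < l \<Longrightarrow> C i j = 0 \<longleftrightarrow> C j i = 0"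
  using finite_type unfolding cartan_finite_type_def by blast

lemma srefl_srefl: "i < l \<Longrightarrow> srefl l C i * srefl l C i = 1\<^sub>m l"
proof (rule eq_matI)
  fix k j assume "i < l" "k < dim_row (1\<^sub>m l)" "j < dim_col (1\<^sub>m l)"
  then show "(srefl l C i * srefl l C i) $$ (k, j) = 1\<^sub>m l $$ (k, j)"
    by (simp del: index_mult_mat add: index_mult_srefl srefl_index C_diag algebra_simps)
qed auto

lemma mult_srefl_srefl: "i < l \<Longrightarrow> M \<in> carrier_mat l l \<Longrightarrow> M * srefl l C i * srefl l C i = M"
  by (metis assoc_mult_mat right_mult_one_mat srefl_carrier srefl_srefl)

lemma srefl_srefl_mult: "i < l \<Longrightarrow> M \<in> carrier_mat l l \<Longrightarrow> srefl l C i * (srefl l C i * M) = M"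
  by (metis assoc_mult_mat left_mult_one_mat srefl_carrier srefl_srefl)

lemma mult_srefl_srefl_mult:
  assumes "i < l" "A \<in> carrier_mat l l" "B \<in> carrier_mat l l"
  shows "(A * srefl l C i) * (srefl l C i * B) = A * B"
proof -
  have "(A * srefl l C i) * (srefl l C i * B) = A * (srefl l C i * (srefl l C i * B))"
    using assms by (intro assoc_mult_mat[of A l l "srefl l C i" l "srefl l C i * B" l]) auto
  then show ?thesis using assms by (simp add: srefl_srefl_mult)
qed

lemma word_prod_cancel: "a < l \<Longrightarrow> word_prod l C (xs @ a # a # ys) = word_prod l C (xs @ ys)"
  by (simp add: word_prod_append srefl_srefl_mult)

lemma word_prod_mult_rev: "set ws \<subseteq> {..<l} \<Longrightarrow> word_prod l C ws * word_prod l C (rev ws) = 1\<^sub>m l"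
proof (induction ws)
  case (Cons x xs)
  let ?P = "word_prod l C xs" and ?R = "word_prod l C (rev xs)" and ?s = "srefl l C x"
  have "word_prod l C (x # xs) * word_prod l C (rev (x # xs)) = ?s * ((?P * ?R) * ?s)"
    by (simp add: word_prod_append) (metis assoc_mult_mat mult_carrier_mat srefl_carrier word_prod_carrier)
  then show ?case using Cons by (simp add: srefl_srefl)
qed simp

lemma word_prod_rev_mult: "set ws \<subseteq> {..<l} \<Longrightarrow> word_prod l C (rev ws) * word_prod l C ws = 1\<^sub>m l"
  using word_prod_mult_rev[of "rev ws"] by simp

lemma weyl_sub_inverse:
  assumes "w \<in> weyl_sub l C S" "S \<subseteq> {..<l}"
  obtains w' where "w' \<in> weyl_sub l C S" "w * w' = 1\<^sub>m l" "w' * w = 1\<^sub>m l"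
proof -
  obtain ws where ws: "set ws \<subseteq> S" "word_prod l C ws = w"
    using assms weyl_subE by blast
  then have "word_prod l C (rev ws) \<in> weyl_sub l C S"
    by (intro weyl_subI) auto
  then show ?thesis
    using that ws assms word_prod_mult_rev[of ws] word_prod_rev_mult[of ws] by auto
qed

lemma weyl_left_cancel:
  assumes "u \<in> weyl l C" "x \<in> carrier_mat l l" "y \<in> carrier_mat l l" "u * x = u * y"
  shows "x = y"
proof -
  obtain u' where u': "u' \<in> weyl l C" "u' * u = 1\<^sub>m l"
    using weyl_sub_inverse[OF assms(1)] by blast
  have uc: "u \<in> carrier_mat l l" "u' \<in> carrier_mat l l"
    using assms(1) u'(1) weyl_sub_carrier by auto
  have "x = u' * (u * x)"
    using assms(2) uc u'(2) by (simp add: assoc_mult_mat[symmetric, of _ l l _ l _ l])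
  also have "\<dots> = y"
    using assms(3,4) uc u'(2) by (simp add: assoc_mult_mat[symmetric, of _ l l _ l _ l])
  finally show ?thesis .
qed

lemma det_srefl:
  assumes "i < l"
  shows "det (srefl l C i) = -1"
proof -
  \<comment> \<open>\<open>D J\<close> arises from \<open>diag(1,..,-1,..,1)\<close> by row operations filling in row \<open>i\<close> at the columns \<open>J\<close>\<close>
  define D where "D J = mat l l (\<lambda>(k, j). (if k = j then (if k = i then -1 else 1) else 0)
      - (if k = i \<and> j \<in> J then C j i else 0))" for J
  have D_carrier: "D J \<in> carrier_mat l l" for J
    unfolding D_def by simp
  have D_index: "D J $$ (k, m) = (if k = m then (if k = i then -1 else 1) else 0) - (if k = i \<and> m \<in> J then C m i else 0)"
    if "k < l" "m < l" for J k m
    unfolding D_def using that by simp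
  have "det (D J) = -1" if "finite J" "J \<subseteq> {..<l} - {i}" for J
    using that
  proof (induction J rule: finite_induct)
    case empty
    have "D {} = multrow_mat l i (-1)"
      by (rule eq_matI) (simp_all add: D_index, simp_all add: D_def multrow_mat_def)
    then show ?case using assms by (simp add: det_multrow_mat)
  next
    case (insert j J)
    have j: "j < l" "j \<noteq> i" "j \<notin> J" using insert by auto
    have "D (insert j J) = addrow (- C j i) i j (D J)"
      by (rule eq_matI) (use j in \<open>auto simp: mat_addrow_def D_index D_carrier[THEN carrier_matD(1)]
          D_carrier[THEN carrier_matD(2)]\<close>)
    then show ?case
      using det_addrow[of j l i "D J" "- C j i"] j D_carrier insert by simp
  qed
  moreover have "D ({..<l} - {i}) = srefl l C i"
    by (rule eq_matI) (use assms in \<open>simp_all add: D_index srefl_index C_diag, simp_all add: D_def\<close>)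
  ultimately show ?thesis by (metis finite_Diff finite_lessThan order_refl)
qed

lemma det_word_prod: "set ws \<subseteq> {..<l} \<Longrightarrow> det (word_prod l C ws) = (-1) ^ length ws"
  by (induction ws) (simp_all add: det_mult[of _ l] det_srefl)

lemma det_len_in:
  assumes "w \<in> weyl_sub l C S" "S \<subseteq> {..<l}"
  shows "det w = (-1) ^ len_in S w"
  by (metis assms reduced_word_exists det_word_prod order_trans)

lemma len_in_mult_srefl:
  assumes "w \<in> weyl_sub l C S" "S \<subseteq> {..<l}" "i \<in> S"
  shows "len_in S (w * srefl l C i) = len_in S w + 1 \<or> len_in S (w * srefl l C i) + 1 = len_in S w"
proof -
  have i: "i < l" using assms by auto
  have ws: "w * srefl l C i \<in> weyl_sub l C S"
    using assms weyl_sub_mult weyl_sub_srefl by blast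
  have "len_in S (w * srefl l C i) \<le> len_in S w + 1"
    using len_in_mult[OF assms(1) weyl_sub_srefl[OF assms(3)]] len_in_srefl_le[OF assms(3)] by linarith
  moreover have "len_in S w \<le> len_in S (w * srefl l C i) + 1"
    using len_in_mult[OF ws weyl_sub_srefl[OF assms(3)]] len_in_srefl_le[OF assms(3)]
      mult_srefl_srefl[OF i weyl_sub_carrier[OF assms(1)]] by simp
  moreover have "det (w * srefl l C i) = - det w"
    using det_mult[OF weyl_sub_carrier[OF assms(1)] srefl_carrier] det_srefl[OF i] by simp
  then have "len_in S (w * srefl l C i) \<noteq> len_in S w"
    using det_len_in[OF ws assms(2)] det_len_in[OF assms(1,2)] by auto
  ultimately show ?thesis by linarith
qed

lemma len_in_srefl: "i \<in> S \<Longrightarrow> S \<subseteq> {..<l} \<Longrightarrow> len_in S (srefl l C i) = 1"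
  using len_in_mult_srefl[OF weyl_sub_one, of S i] len_in_le_length[of "[]" S] by auto

end

section \<open>Root coordinates and rank two\<close>

definition qform :: "nat \<Rightarrow> (nat \<Rightarrow> nat \<Rightarrow> real) \<Rightarrow> (nat \<Rightarrow> real) \<Rightarrow> real" where
  "qform n A x = (\<Sum>i<n. \<Sum>j<n. x i * A i j * x j)"

lemma sum_lessThan_two:
  fixes n :: nat
  assumes "s < n" "t < n" "s \<noteq> t" "\<And>i. i < n \<Longrightarrow> i \<noteq> s \<Longrightarrow> i \<noteq> t \<Longrightarrow> g i = 0"
  shows "(\<Sum>i<n. g i) = g s + g t"
proof -
  have "(\<Sum>i<n. g i) = (\<Sum>i\<in>{s, t}. g i)"
    using assms by (intro sum.mono_neutral_right) auto
  then show ?thesis using assms by simp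
qed

lemma qform_two_coords:
  fixes n :: nat
  assumes "s < n" "t < n" "s \<noteq> t" "\<And>k. k < n \<Longrightarrow> k \<noteq> s \<Longrightarrow> k \<noteq> t \<Longrightarrow> x k = 0"
  shows "qform n A x = x s * A s s * x s + x s * A s t * x t + x t * A t s * x s + x t * A t t * x t"
proof -
  have inner: "(\<Sum>j<n. x i * A i j * x j) = x i * A i s * x s + x i * A i t * x t" for i
    by (rule sum_lessThan_two[OF assms(1-3)]) (simp add: assms(4))
  show ?thesis
    unfolding qform_def inner by (subst sum_lessThan_two[OF assms(1-3)]) (auto simp: assms(4))
qed

context simple_reflections
begin

text \<open>Column \<open>j\<close> of \<open>w\<close> holds the coordinates of \<open>w(\<alpha>\<^sub>j)\<close>; \<open>coroot_pairing i x\<close> is \<open>\<langle>x, \<alpha>\<^sub>i\<^sup>\<or>\<rangle>\<close>.\<close>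

definition simple_root :: "nat \<Rightarrow> nat \<Rightarrow> int" where
  "simple_root j = (\<lambda>k. if k = j then 1 else 0)"

definition coroot_pairing :: "nat \<Rightarrow> (nat \<Rightarrow> int) \<Rightarrow> int" where
  "coroot_pairing i x = (\<Sum>m<l. C m i * x m)"

definition refl_coords :: "nat \<Rightarrow> (nat \<Rightarrow> int) \<Rightarrow> nat \<Rightarrow> int" where
  "refl_coords i x = (\<lambda>k. if k = i then x k - coroot_pairing i x else x k)"

definition word_coords :: "nat list \<Rightarrow> (nat \<Rightarrow> int) \<Rightarrow> nat \<Rightarrow> int" where
  "word_coords ws x = foldr refl_coords ws x"

lemma word_coords_Nil [simp]: "word_coords [] x = x"
  unfolding word_coords_def by simp

lemma word_coords_Cons [simp]: "word_coords (i # ws) x = refl_coords i (word_coords ws x)"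
  unfolding word_coords_def by simp

lemma word_prod_index:
  assumes "set ws \<subseteq> {..<l}" "k < l" "j < l"
  shows "word_prod l C ws $$ (k, j) = word_coords ws (simple_root j) k"
  using assms(1,2)
proof (induction ws arbitrary: k)
  case Nil
  then show ?case using assms by (simp add: simple_root_def)
next
  case (Cons i ws)
  have "word_prod l C (i # ws) $$ (k, j) = word_prod l C ws $$ (k, j) -
     (if k = i then (\<Sum>m<l. C m i * word_prod l C ws $$ (m, j)) else 0)"
    using Cons.prems assms by (simp add: index_srefl_mult del: index_mult_mat)
  also have "\<dots> = refl_coords i (word_coords ws (simple_root j)) k"
    using Cons by (auto simp: refl_coords_def coroot_pairing_def intro!: sum.cong)
  finally show ?case by simp
qed

lemma word_prod_eqI:
  assumes "set xs \<subseteq> {..<l}" "set ys \<subseteq> {..<l}"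
    "\<And>j k. j < l \<Longrightarrow> k < l \<Longrightarrow> word_coords xs (simple_root j) k = word_coords ys (simple_root j) k"
  shows "word_prod l C xs = word_prod l C ys"
  by (rule eq_matI) (use assms in \<open>auto simp: word_prod_index\<close>)

text \<open>Inside the plane spanned by \<open>\<alpha>\<^sub>s, \<alpha>\<^sub>t\<close>: \<open>span_add s t x a b = x + a \<alpha>\<^sub>s + b \<alpha>\<^sub>t\<close>, and
  \<open>span_step\<close> records how \<open>s\<^sub>s\<close>, \<open>s\<^sub>t\<close> change \<open>(a, b)\<close> when \<open>p, q\<close> are the pairings of \<open>x\<close>
  with \<open>\<alpha>\<^sub>s\<^sup>\<or>, \<alpha>\<^sub>t\<^sup>\<or>\<close>.\<close>

definition span_add :: "nat \<Rightarrow> nat \<Rightarrow> (nat \<Rightarrow> int) \<Rightarrow> int \<Rightarrow> int \<Rightarrow> nat \<Rightarrow> int" where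
  "span_add s t x a b = (\<lambda>k. x k + (if k = s then a else 0) + (if k = t then b else 0))"

definition span_step :: "nat \<Rightarrow> nat \<Rightarrow> int \<Rightarrow> int \<Rightarrow> nat \<Rightarrow> int \<times> int \<Rightarrow> int \<times> int" where
  "span_step s t p q i ab = (if i = s then (- fst ab - p - snd ab * C t s, snd ab)
                                     else (fst ab, - snd ab - q - fst ab * C s t))"

lemma coroot_pairing_span_add:
  assumes "s < l" "t < l" "s \<noteq> t"
  shows "coroot_pairing i (span_add s t x a b) = coroot_pairing i x + C s i * a + C t i * b"
proof -
  have "coroot_pairing i (span_add s t x a b) = (\<Sum>m<l. C m i * x m + (if m = s then C m i * a else 0)
      + (if m = t then C m i * b else 0))"
    unfolding coroot_pairing_def span_add_def by (intro sum.cong) (auto simp: algebra_simps)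
  then show ?thesis using assms by (simp add: sum.distrib coroot_pairing_def)
qed

end

fun alt_word :: "nat \<Rightarrow> nat \<Rightarrow> nat \<Rightarrow> nat list" where
  "alt_word x y 0 = []"
| "alt_word x y (Suc n) = alt_word y x n @ [x]"

lemma set_alt_word: "set (alt_word x y n) \<subseteq> {x, y}"
  by (induction n arbitrary: x y) auto

lemma length_alt_word [simp]: "length (alt_word x y n) = n"
  by (induction n arbitrary: x y) auto

lemma last_alt_word: "n > 0 \<Longrightarrow> last (alt_word x y n) = x"
  by (cases n) auto

lemma alt_word_add: "\<exists>P. alt_word x y (k + m) = P @ alt_word x y m"
proof (induction m arbitrary: x y)
  case (Suc m)
  then obtain P where "alt_word y x (k + m) = P @ alt_word y x m" by blast
  then show ?case by simp
qed simp

lemma alt_word_unique: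
  assumes "set ws \<subseteq> {x, y}" "x \<noteq> y" "distinct_adj ws" "ws \<noteq> [] \<Longrightarrow> last ws = x"
  shows "ws = alt_word x y (length ws)"
  using assms
proof (induction ws arbitrary: x y rule: rev_induct)
  case (snoc z zs)
  have "last zs = y" if "zs \<noteq> []"
  proof -
    have "last zs \<in> {x, y}"
      using snoc.prems(1) last_in_set[OF that] by auto
    moreover have "last zs \<noteq> x"
      using snoc.prems that by (auto simp: distinct_adj_append_iff)
    ultimately show ?thesis by blast
  qed
  then have "zs = alt_word y x (length zs)"
    using snoc.IH[of y x] snoc.prems by (auto simp: distinct_adj_append_iff)
  then show ?case using snoc.prems by simp
qed simp

context cartan
begin

lemma cartan_form:
  obtains e :: "nat \<Rightarrow> real" where "\<And>i. i < l \<Longrightarrow> e i > 0"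
    "\<And>i j. i < l \<Longrightarrow> j < l \<Longrightarrow> of_int (C i j) * e j = of_int (C j i) * e i"
    "\<And>x. \<exists>i<l. x i \<noteq> 0 \<Longrightarrow> qform l (\<lambda>i j. of_int (C i j) * e j) x > 0"
proof -
  obtain e :: "nat \<Rightarrow> real" where e: "\<forall>i<l. e i > 0"
    "\<forall>i<l. \<forall>j<l. of_int (C i j) * e j = of_int (C j i) * e i"
    "\<forall>x. (\<exists>i<l. x i \<noteq> 0) \<longrightarrow> qform l (\<lambda>i j. of_int (C i j) * e j) x > 0"
    using finite_type unfolding cartan_finite_type_def qform_def by blast
  show thesis
    by (rule that) (use e in auto)
qed

lemma C_mult_C_le_3:
  assumes "s < l" "t < l" "s \<noteq> t"
  shows "C s t * C t s \<le> 3"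
proof (rule ccontr)
  assume gt: "\<not> ?thesis"
  obtain e :: "nat \<Rightarrow> real" where e_pos: "\<And>i. i < l \<Longrightarrow> e i > 0"
    and e_sym: "\<And>i j. i < l \<Longrightarrow> j < l \<Longrightarrow> of_int (C i j) * e j = of_int (C j i) * e i"
    and pos_def: "\<And>x. \<exists>i<l. x i \<noteq> 0 \<Longrightarrow> qform l (\<lambda>i j. of_int (C i j) * e j) x > 0"
    using cartan_form by blast
  define \<beta> where "\<beta> = of_int (C s t) * e t"
  have \<beta>_alt: "\<beta> = of_int (C t s) * e s"
    using e_sym assms \<beta>_def by auto
  \<comment> \<open>the form is not positive on \<open>2 e\<^sub>s \<alpha>\<^sub>t - \<beta> \<alpha>\<^sub>s\<close>\<close>
  define x where "x = (\<lambda>k. if k = s then - \<beta> else if k = t then 2 * e s else 0)"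
  have "\<beta> * \<beta> = of_int (C s t * C t s) * (e s * e t)"
    by (simp add: \<beta>_def \<beta>_alt[symmetric])
  moreover have "of_int (C s t * C t s) \<ge> (4::real)"
    using gt by linarith
  moreover have "e s * e t \<ge> 0"
    using e_pos assms by (simp add: less_imp_le)
  ultimately have "\<beta> * \<beta> \<ge> 4 * (e s * e t)"
    by (metis mult_right_mono)
  then have "2 * e s * (4 * (e s * e t) - \<beta> * \<beta>) \<le> 0"
    using e_pos[OF assms(1)] by (simp add: mult_nonneg_nonpos)
  moreover have "qform l (\<lambda>i j. of_int (C i j) * e j) x = 2 * e s * (4 * (e s * e t) - \<beta> * \<beta>)"
  proof -
    have "qform l (\<lambda>i j. of_int (C i j) * e j) x =
       x s * (of_int (C s s) * e s) * x s + x s * (of_int (C s t) * e t) * x t +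
       x t * (of_int (C t s) * e s) * x s + x t * (of_int (C t t) * e t) * x t"
      by (rule qform_two_coords[OF assms]) (simp add: x_def)
    also have "\<dots> = (-\<beta>) * (2 * e s) * (-\<beta>) + (-\<beta>) * \<beta> * (2 * e s) + (2 * e s) * \<beta> * (-\<beta>)
        + (2 * e s) * (2 * e t) * (2 * e s)"
      using assms by (simp only: x_def C_diag \<beta>_def[symmetric] \<beta>_alt[symmetric] if_True if_False) simp
    finally show ?thesis by (simp add: algebra_simps)
  qed
  moreover have "\<exists>i<l. x i \<noteq> 0"
    using assms e_pos[OF assms(1)] by (intro exI[of _ t]) (auto simp: x_def)
  ultimately show False using pos_def by fastforce
qed

lemma rank2_cases:
  assumes "s < l" "t < l" "s \<noteq> t"
  shows "(C s t = 0 \<and> C t s = 0) \<or> (C s t = -1 \<and> C t s = -1) \<or> (C s t = -1 \<and> C t s = -2)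
    \<or> (C s t = -2 \<and> C t s = -1) \<or> (C s t = -1 \<and> C t s = -3) \<or> (C s t = -3 \<and> C t s = -1)"
proof (cases "C s t = 0")
  case True
  then show ?thesis using C_eq_0_sym assms by simp
next
  case False
  then have neg: "C s t \<le> -1" "C t s \<le> -1"
    using C_offdiag_nonpos[OF assms] C_offdiag_nonpos[OF assms(2,1) assms(3)[symmetric]]
      C_eq_0_sym[OF assms(1,2)] by auto
  have prod: "C s t * C t s \<le> 3"
    using C_mult_C_le_3[OF assms] .
  have "C s t \<ge> -3"
  proof (rule ccontr)
    assume "\<not> C s t \<ge> -3"
    then have "C s t * C t s \<ge> (-4) * C t s"
      using neg by (intro mult_right_mono_neg) auto
    then show False using neg prod by linarith
  qed
  moreover have "C t s \<ge> -3"
  proof (rule ccontr)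
    assume "\<not> C t s \<ge> -3"
    then have "C s t * C t s \<ge> C s t * (-4)"
      using neg by (intro mult_left_mono_neg) auto
    then show False using neg prod by linarith
  qed
  ultimately have "C s t \<in> {-3, -2, -1}" "C t s \<in> {-3, -2, -1}"
    using neg by auto
  then show ?thesis using prod by auto
qed

lemma refl_coords_span_add:
  assumes "s < l" "t < l" "s \<noteq> t"
  shows "refl_coords s (span_add s t x a b) = span_add s t x (- a - coroot_pairing s x - b * C t s) b"
    "refl_coords t (span_add s t x a b) = span_add s t x a (- b - coroot_pairing t x - a * C s t)"
proof -
  have "coroot_pairing s (span_add s t x a b) = coroot_pairing s x + 2 * a + C t s * b"
    "coroot_pairing t (span_add s t x a b) = coroot_pairing t x + C s t * a + 2 * b"
    using coroot_pairing_span_add[OF assms] C_diag assms by simp_all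
  then show "refl_coords s (span_add s t x a b) = span_add s t x (- a - coroot_pairing s x - b * C t s) b"
    "refl_coords t (span_add s t x a b) = span_add s t x a (- b - coroot_pairing t x - a * C s t)"
    unfolding refl_coords_def using assms by (auto simp: span_add_def fun_eq_iff algebra_simps)
qed

lemma word_coords_span_add:
  assumes "s < l" "t < l" "s \<noteq> t" "set ws \<subseteq> {s, t}"
  shows "word_coords ws (span_add s t x a b) = span_add s t x
    (fst (foldr (span_step s t (coroot_pairing s x) (coroot_pairing t x)) ws (a, b)))
    (snd (foldr (span_step s t (coroot_pairing s x) (coroot_pairing t x)) ws (a, b)))"
  using assms(4)
proof (induction ws)
  case (Cons i ws)
  then have "i = s \<or> i = t" by auto
  then show ?case using Cons assms by (auto simp: refl_coords_span_add span_step_def)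
qed simp

definition coxeter_m :: "nat \<Rightarrow> nat \<Rightarrow> nat" where
  "coxeter_m s t = (if C s t * C t s = 0 then 2 else if C s t * C t s = 1 then 3
                    else if C s t * C t s = 2 then 4 else 6)"

lemma braid_relation:
  assumes "s < l" "t < l" "s \<noteq> t"
  shows "word_prod l C (alt_word s t (coxeter_m s t)) = word_prod l C (alt_word t s (coxeter_m s t))"
proof (rule word_prod_eqI)
  show "set (alt_word s t (coxeter_m s t)) \<subseteq> {..<l}" "set (alt_word t s (coxeter_m s t)) \<subseteq> {..<l}"
    using set_alt_word assms by blast+
  fix j k
  have st: "set (alt_word s t (coxeter_m s t)) \<subseteq> {s, t}" "set (alt_word t s (coxeter_m s t)) \<subseteq> {s, t}"
    using set_alt_word by blast+
  have root: "simple_root j = span_add s t (simple_root j) 0 0"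
    unfolding span_add_def by simp
  have "foldr (span_step s t p q) (alt_word s t (coxeter_m s t)) (0, 0)
      = foldr (span_step s t p q) (alt_word t s (coxeter_m s t)) (0, 0)" for p q
    using rank2_cases[OF assms] assms
    by (elim disjE) (simp_all add: coxeter_m_def eval_nat_numeral span_step_def algebra_simps)
  then show "word_coords (alt_word s t (coxeter_m s t)) (simple_root j) k
      = word_coords (alt_word t s (coxeter_m s t)) (simple_root j) k"
    by (subst (1 2) root) (simp only: word_coords_span_add[OF assms st(1)] word_coords_span_add[OF assms st(2)])
qed

lemma alt_word_simple_root_nonneg:
  assumes "s < l" "t < l" "s \<noteq> t" "n < coxeter_m s t"
  shows "\<exists>a b. a \<ge> 0 \<and> b \<ge> 0 \<and> word_coords (alt_word t s n) (simple_root s) = span_add s t (\<lambda>_. 0) a b"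
proof -
  have root: "simple_root s = span_add s t (\<lambda>_. 0) 1 0"
    unfolding span_add_def simple_root_def using assms by auto
  have pairing: "coroot_pairing i (\<lambda>_. 0) = 0" for i
    by (simp add: coroot_pairing_def)
  have st: "set (alt_word t s n) \<subseteq> {s, t}"
    using set_alt_word by blast
  have "fst (foldr (span_step s t 0 0) (alt_word t s n) (1, 0)) \<ge> 0
      \<and> snd (foldr (span_step s t 0 0) (alt_word t s n) (1, 0)) \<ge> 0"
    using rank2_cases[OF assms(1-3)] assms(3,4)
    by (elim disjE) (auto simp: coxeter_m_def eval_nat_numeral less_Suc_eq span_step_def)
  then show ?thesis
    unfolding root word_coords_span_add[OF assms(1-3) st] pairing by blast
qed

end

section \<open>Positivity of roots and minimal coset representatives\<close>

context cartan
begin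

lemma word_prod_mult_last_srefl:
  assumes "ws \<noteq> []" "set ws \<subseteq> {..<l}"
  shows "word_prod l C ws * srefl l C (last ws) = word_prod l C (butlast ws)"
proof -
  have "ws = butlast ws @ [last ws]"
    using assms(1) by simp
  moreover have "last ws < l"
    using assms last_in_set by blast
  ultimately show ?thesis
    by (metis word_prod_append word_prod_Cons word_prod_Nil mult_srefl_srefl word_prod_carrier
        right_mult_one_mat srefl_carrier)
qed

lemma len_in_mult_last_srefl:
  assumes "set ws \<subseteq> S" "S \<subseteq> {..<l}" "ws \<noteq> []"
  shows "len_in S (word_prod l C ws * srefl l C (last ws)) \<le> length ws - 1"
  using assms len_in_butlast word_prod_mult_last_srefl by (metis order_trans)

lemma reduced_word_distinct_adj:
  assumes "set ws \<subseteq> S" "S \<subseteq> {..<l}" "length ws = len_in S (word_prod l C ws)"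
  shows "distinct_adj ws"
  unfolding distinct_adj_conv_nth
proof (intro allI impI notI)
  fix i assume i: "Suc i < length ws" and eq: "ws ! i = ws ! Suc i"
  define a where "a = ws ! i"
  have split: "ws = take i ws @ a # a # drop (Suc (Suc i)) ws"
    using i eq unfolding a_def by (metis Cons_nth_drop_Suc Suc_lessD append_take_drop_id)
  have "a < l"
    using i assms(1,2) unfolding a_def by (meson Suc_lessD nth_mem subsetD lessThan_iff)
  then have "word_prod l C ws = word_prod l C (take i ws @ drop (Suc (Suc i)) ws)"
    by (subst split) (rule word_prod_cancel)
  moreover have "set (take i ws @ drop (Suc (Suc i)) ws) \<subseteq> S"
    using assms(1) set_take_subset[of i ws] set_drop_subset[of "Suc (Suc i)" ws] by auto
  ultimately have "len_in S (word_prod l C ws) \<le> length (take i ws @ drop (Suc (Suc i)) ws)"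
    by (metis len_in_le_length)
  then show False using assms(3) i by simp
qed

text \<open>By the braid relation, the element represented by an alternating word of length at least
  \<open>m\<^sub>s\<^sub>t\<close> ending in \<open>t\<close> is also represented by a word of the same length ending in \<open>s\<close>.\<close>

lemma long_alt_word_descent:
  assumes st: "s < l" "t < l" "s \<noteq> t" and n: "coxeter_m s t \<le> n"
  shows "len_in {s, t} (word_prod l C (alt_word t s n) * srefl l C s) \<le> n - 1"
proof -
  obtain P where P: "alt_word t s n = P @ alt_word t s (coxeter_m s t)"
    using alt_word_add[of t s "n - coxeter_m s t" "coxeter_m s t"] n by auto
  define ws where "ws = P @ alt_word s t (coxeter_m s t)"
  have m_pos: "coxeter_m s t > 0"
    unfolding coxeter_m_def by simp
  then have "alt_word s t (coxeter_m s t) \<noteq> []"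
    by (cases "coxeter_m s t") auto
  then have "ws \<noteq> []" "last ws = s"
    unfolding ws_def using last_alt_word[OF m_pos] by (auto simp: last_append)
  moreover have "word_prod l C ws = word_prod l C (alt_word t s n)"
    unfolding ws_def P by (simp add: word_prod_append braid_relation[OF st])
  moreover have "set ws \<subseteq> {s, t}"
    using set_alt_word[of t s n] set_alt_word[of s t] P unfolding ws_def by auto
  moreover have "length ws = n"
    using arg_cong[OF P, of length] unfolding ws_def by simp
  ultimately show ?thesis
    using len_in_mult_last_srefl[of ws "{s, t}"] st by fastforce
qed

lemma rank2_reduced_word:
  assumes st: "s < l" "t < l" "s \<noteq> t"
    and ws: "set ws \<subseteq> {s, t}" "length ws = len_in {s, t} (word_prod l C ws)"
    and ascent: "len_in {s, t} (word_prod l C ws * srefl l C s) > length ws"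
  shows "ws = alt_word t s (length ws)" "length ws < coxeter_m s t"
proof -
  have I: "{s, t} \<subseteq> {..<l}" using st by auto
  have last_t: "last ws = t" if "ws \<noteq> []"
  proof -
    have "last ws \<noteq> s"
      using len_in_mult_last_srefl[OF ws(1) I that] ascent by fastforce
    moreover have "last ws \<in> {s, t}"
      using that ws(1) last_in_set by blast
    ultimately show ?thesis by blast
  qed
  have "set ws \<subseteq> {t, s}"
    using ws(1) by auto
  then show alt: "ws = alt_word t s (length ws)"
    using st(3)[symmetric] reduced_word_distinct_adj[OF ws(1) I ws(2)] last_t by (rule alt_word_unique) auto
  show "length ws < coxeter_m s t"
    using long_alt_word_descent[OF st, of "length ws"] alt ascent by fastforce
qed

lemma rank2_ascent_column:
  assumes st: "s < l" "t < l" "s \<noteq> t" and vI: "vI \<in> weyl_sub l C {s, t}"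
    and ascent: "len_in {s, t} (vI * srefl l C s) > len_in {s, t} vI"
    and k: "k < l"
  shows "vI $$ (k, s) \<ge> 0" "k \<noteq> s \<Longrightarrow> k \<noteq> t \<Longrightarrow> vI $$ (k, s) = 0"
proof -
  obtain ws where ws: "set ws \<subseteq> {s, t}" "length ws = len_in {s, t} vI" "word_prod l C ws = vI"
    using vI reduced_word_exists by blast
  have "ws = alt_word t s (length ws)" "length ws < coxeter_m s t"
    using rank2_reduced_word[OF st ws(1)] ws ascent by simp_all
  then obtain a b where ab: "a \<ge> 0" "b \<ge> 0" "word_coords ws (simple_root s) = span_add s t (\<lambda>_. 0) a b"
    using alt_word_simple_root_nonneg[OF st] by metis
  have "vI $$ (k, s) = span_add s t (\<lambda>_. 0) a b k"
    using word_prod_index[of ws k s] ws st k ab(3) by auto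
  then show "vI $$ (k, s) \<ge> 0" "k \<noteq> s \<Longrightarrow> k \<noteq> t \<Longrightarrow> vI $$ (k, s) = 0"
    using ab by (auto simp: span_add_def)
qed

text \<open>Among all factorizations \<open>w\<^sub>0 vI\<^sub>0 = v vI\<close> with additive lengths, choose one with \<open>v\<close> shortest.\<close>

lemma parabolic_factorization:
  assumes S: "S \<subseteq> {..<l}" and I: "I \<subseteq> S"
    and w0: "w0 \<in> weyl_sub l C S" "vI0 \<in> weyl_sub l C I" "len_in S (w0 * vI0) = len_in S w0 + len_in I vI0"
  obtains v vI where "v \<in> weyl_sub l C S" "vI \<in> weyl_sub l C I" "w0 * vI0 = v * vI"
    "len_in S (w0 * vI0) = len_in S v + len_in I vI" "len_in S v \<le> len_in S w0"
    "\<And>x. x \<in> I \<Longrightarrow> len_in S (v * srefl l C x) > len_in S v"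
proof -
  define w where "w = w0 * vI0"
  define A where "A = {(v, vI). v \<in> weyl_sub l C S \<and> vI \<in> weyl_sub l C I \<and> w = v * vI
      \<and> len_in S w = len_in S v + len_in I vI}"
  have "(w0, vI0) \<in> A"
    unfolding A_def w_def using w0 by auto
  then obtain p where pA: "p \<in> A" and p_min: "\<And>q. q \<in> A \<Longrightarrow> len_in S (fst p) \<le> len_in S (fst q)"
    using ex_has_least_nat[of "\<lambda>q. q \<in> A" _ "\<lambda>q. len_in S (fst q)"] by blast
  obtain v vI where p: "p = (v, vI)" by (cases p)
  have v: "v \<in> weyl_sub l C S" and vI: "vI \<in> weyl_sub l C I" and w: "w = v * vI"
    and len_w: "len_in S w = len_in S v + len_in I vI"
    using pA p unfolding A_def by auto
  have "len_in S (v * srefl l C x) > len_in S v" if x: "x \<in> I" for x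
  proof (rule ccontr)
    assume no_ascent: "\<not> ?thesis"
    have xS: "x \<in> S" and xl: "x < l" using x I S by auto
    have descent: "len_in S (v * srefl l C x) + 1 = len_in S v"
      using len_in_mult_srefl[OF v S xS] no_ascent by auto
    have vx: "v * srefl l C x \<in> weyl_sub l C S" and xvI: "srefl l C x * vI \<in> weyl_sub l C I"
      using v vI x xS weyl_sub_mult weyl_sub_srefl by blast+
    have w_alt: "w = (v * srefl l C x) * (srefl l C x * vI)"
      using w mult_srefl_srefl_mult[OF xl weyl_sub_carrier[OF v] weyl_sub_carrier[OF vI]] by simp
    have "len_in I (srefl l C x * vI) \<le> 1 + len_in I vI"
      using len_in_mult[OF weyl_sub_srefl[OF x] vI] len_in_srefl_le[OF x] by simp
    moreover have "len_in S w \<le> len_in S (v * srefl l C x) + len_in S (srefl l C x * vI)"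
      using len_in_mult[OF vx] xvI weyl_sub_mono[OF I] w_alt by auto
    moreover have "len_in S (srefl l C x * vI) \<le> len_in I (srefl l C x * vI)"
      using len_in_mono[OF I xvI] .
    ultimately have "(v * srefl l C x, srefl l C x * vI) \<in> A"
      unfolding A_def using len_w descent w_alt vx xvI by auto
    then show False
      using p_min p descent by fastforce
  qed
  moreover have "len_in S v \<le> len_in S w0"
    using p_min[OF \<open>(w0, vI0) \<in> A\<close>] p by simp
  ultimately show thesis
    using that v vI w len_w unfolding w_def by blast
qed

lemma right_descent_exists:
  assumes w: "w \<in> weyl_sub l C S" and S: "S \<subseteq> {..<l}" and nontrivial: "len_in S w \<noteq> 0"
  obtains t w0 where "t \<in> S" "w0 \<in> weyl_sub l C S" "w = w0 * srefl l C t" "len_in S w0 + 1 = len_in S w"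
proof -
  obtain ws where ws: "set ws \<subseteq> S" "length ws = len_in S w" "word_prod l C ws = w"
    using reduced_word_exists[OF w] by blast
  define t where "t = last ws"
  define w0 where "w0 = word_prod l C (butlast ws)"
  have ne: "ws \<noteq> []"
    using ws nontrivial by auto
  have t: "t \<in> S" "t < l"
    using ne ws S last_in_set unfolding t_def by auto
  have w_split: "w = w0 * srefl l C t"
    using word_prod_mult_last_srefl[OF ne] ws S mult_srefl_srefl[OF t(2)] unfolding w0_def t_def
    by (metis order_trans word_prod_carrier)
  have w0: "w0 \<in> weyl_sub l C S"
    unfolding w0_def using ws(1) in_set_butlastD by (fastforce intro: weyl_subI)
  have "len_in S w0 + 1 = len_in S w"
    using len_in_butlast[OF ws(1) ne] len_in_mult[OF w0 weyl_sub_srefl[OF t(1)]]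
      len_in_srefl_le[OF t(1)] w_split ws(2) nontrivial unfolding w0_def by fastforce
  then show thesis
    using that t(1) w0 w_split by blast
qed

lemma parabolic_factor_ascent:
  assumes S: "S \<subseteq> {..<l}" and I: "I \<subseteq> S" and v: "v \<in> weyl_sub l C S" and vI: "vI \<in> weyl_sub l C I"
    and len: "len_in S (v * vI) = len_in S v + len_in I vI"
    and s: "s \<in> I" and ascent: "len_in S (v * vI * srefl l C s) > len_in S (v * vI)"
  shows "len_in I (vI * srefl l C s) > len_in I vI"
proof (rule ccontr)
  assume no_ascent: "\<not> ?thesis"
  have vI_s: "vI * srefl l C s \<in> weyl_sub l C I"
    using vI s weyl_sub_srefl weyl_sub_mult by blast
  have "len_in I (vI * srefl l C s) + 1 = len_in I vI"
    using len_in_mult_srefl[OF vI _ s] I S no_ascent by fastforce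
  moreover have "v * vI * srefl l C s = v * (vI * srefl l C s)"
    using weyl_sub_carrier[OF v] weyl_sub_carrier[OF vI] by (simp add: assoc_mult_mat[of _ l l _ l _ l])
  then have "len_in S (v * vI * srefl l C s) \<le> len_in S v + len_in S (vI * srefl l C s)"
    using len_in_mult[OF v] vI_s weyl_sub_mono[OF I] by auto
  moreover have "len_in S (vI * srefl l C s) \<le> len_in I (vI * srefl l C s)"
    using len_in_mono[OF I vI_s] .
  ultimately show False
    using ascent len by linarith
qed

text \<open>Induction on the length of \<open>w\<close>: with \<open>t\<close> a descent of \<open>w\<close>, write \<open>w = v vI\<close> with
  \<open>vI\<close> in the subgroup generated by \<open>s\<^sub>s, s\<^sub>t\<close> and \<open>v\<close> shorter without descents in \<open>{s, t}\<close>,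
  and use the rank two case for \<open>vI\<close>.\<close>

lemma ascent_column_nonneg:
  assumes S: "S \<subseteq> {..<l}"
  shows "w \<in> weyl_sub l C S \<Longrightarrow> s \<in> S \<Longrightarrow> len_in S (w * srefl l C s) > len_in S w \<Longrightarrow> k < l
    \<Longrightarrow> w $$ (k, s) \<ge> 0"
proof (induction "len_in S w" arbitrary: w s k rule: less_induct)
  case less
  note w = less.prems(1) and s = less.prems(2) and ascent = less.prems(3) and k = less.prems(4)
  have sl: "s < l" using s S by auto
  show ?case
  proof (cases "len_in S w = 0")
    case True
    then show ?thesis using len_in_eq_0[OF w] k sl by simp
  next
    case False
    then obtain t w0 where t: "t \<in> S" and w0: "w0 \<in> weyl_sub l C S" and w_split: "w = w0 * srefl l C t"
      and len_w0: "len_in S w0 + 1 = len_in S w"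
      using right_descent_exists[OF w S] by blast
    have tl: "t < l" using t S by auto
    have ts: "t \<noteq> s"
      using ascent w_split len_w0 mult_srefl_srefl[OF tl weyl_sub_carrier[OF w0]] by auto
    define I where "I = {s, t}"
    have I: "I \<subseteq> S" "I \<subseteq> {..<l}"
      using s t S unfolding I_def by auto
    have "len_in S (w0 * srefl l C t) = len_in S w0 + len_in I (srefl l C t)"
      using len_in_srefl[of t I] I len_w0 w_split unfolding I_def by auto
    then obtain v vI where v: "v \<in> weyl_sub l C S" and vI: "vI \<in> weyl_sub l C I"
      and w_eq: "w = v * vI" and len_w: "len_in S w = len_in S v + len_in I vI"
      and shorter: "len_in S v \<le> len_in S w0"
      and v_ascent: "\<And>x. x \<in> I \<Longrightarrow> len_in S (v * srefl l C x) > len_in S v"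
      using parabolic_factorization[OF S I(1) w0 weyl_sub_srefl[of t I]] w_split
      unfolding I_def by auto
    have v_cols: "v $$ (k, x) \<ge> 0" if "x \<in> I" for x
      using less.hyps[OF _ v _ v_ascent[OF that] k] shorter len_w0 that I by fastforce
    have "len_in I (vI * srefl l C s) > len_in I vI"
      using parabolic_factor_ascent[OF S I(1) v vI] w_eq len_w ascent I_def by simp
    then have vI_col: "vI $$ (m, s) \<ge> 0" "m \<noteq> s \<Longrightarrow> m \<noteq> t \<Longrightarrow> vI $$ (m, s) = 0" if "m < l" for m
      using rank2_ascent_column[OF sl tl ts[symmetric]] vI that unfolding I_def by auto
    have "w $$ (k, s) = (\<Sum>m<l. v $$ (k, m) * vI $$ (m, s))"
      using w_eq index_mult_lessThan[OF weyl_sub_carrier[OF v] weyl_sub_carrier[OF vI] k sl] by simp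
    also have "\<dots> = v $$ (k, s) * vI $$ (s, s) + v $$ (k, t) * vI $$ (t, s)"
      using vI_col(2) by (intro sum_lessThan_two) (use sl tl ts in auto)
    also have "\<dots> \<ge> 0"
      using v_cols vI_col(1) sl tl unfolding I_def by simp
    finally show ?thesis .
  qed
qed

lemma descent_column_nonpos:
  assumes "w \<in> weyl_sub l C S" "S \<subseteq> {..<l}" "s \<in> S" "len_in S (w * srefl l C s) < len_in S w" "k < l"
  shows "w $$ (k, s) \<le> 0"
proof -
  have s: "s < l" using assms by auto
  define w' where "w' = w * srefl l C s"
  have w': "w' \<in> weyl_sub l C S"
    unfolding w'_def using assms weyl_sub_mult weyl_sub_srefl by blast
  have w'_s: "w' * srefl l C s = w"
    unfolding w'_def using mult_srefl_srefl[OF s weyl_sub_carrier[OF assms(1)]] .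
  have "w' $$ (k, s) \<ge> 0"
    using ascent_column_nonneg[OF assms(2) w' assms(3)] w'_s assms(4,5) unfolding w'_def by simp
  moreover have "w $$ (k, s) = - w' $$ (k, s)"
    using index_mult_srefl[of w' k s s] w'_s weyl_sub_carrier[OF w'] assms s C_diag by auto
  ultimately show ?thesis by simp
qed

lemma weyl_sub_nontrivial_column:
  assumes v: "v \<in> weyl_sub l C S" and S: "S \<subseteq> {..<l}" and nontrivial: "v \<noteq> 1\<^sub>m l"
  obtains s where "s \<in> S" "\<And>k. k < l \<Longrightarrow> v $$ (k, s) \<le> 0" "\<And>k. k < l \<Longrightarrow> k \<notin> S \<Longrightarrow> v $$ (k, s) = 0"
proof -
  obtain s v0 where s: "s \<in> S" and v0: "v0 \<in> weyl_sub l C S" and v_split: "v = v0 * srefl l C s"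
    and len_v0: "len_in S v0 + 1 = len_in S v"
    using right_descent_exists[OF v S] len_in_eq_0[OF v] nontrivial by metis
  have "v * srefl l C s = v0"
    using v_split mult_srefl_srefl s S weyl_sub_carrier[OF v0] by auto
  then have "len_in S (v * srefl l C s) < len_in S v"
    using len_v0 by simp
  then show ?thesis
  proof (intro that[OF s])
    fix k assume "k < l" "k \<notin> S"
    then show "v $$ (k, s) = 0"
      using weyl_sub_index_outside[OF v] s S by auto
  qed (use descent_column_nonpos[OF v S s] in blast)
qed

lemma weyl_column_nonzero:
  assumes "u \<in> weyl l C" "s < l"
  shows "\<exists>k<l. u $$ (k, s) \<noteq> 0"
proof (rule ccontr)
  assume zero: "\<not> ?thesis"
  obtain u' where u': "u' \<in> weyl l C" "u' * u = 1\<^sub>m l"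
    using weyl_sub_inverse[OF assms(1)] by blast
  have "(u' * u) $$ (s, s) = (\<Sum>m<l. u' $$ (s, m) * u $$ (m, s))"
    using index_mult_lessThan u' assms weyl_sub_carrier by blast
  also have "\<dots> = 0" using zero by simp
  finally show False using u' assms by simp
qed

lemma min_rep_column_nonneg:
  assumes "min_rep l C S u" "S \<subseteq> {..<l}" "m \<in> S" "k < l"
  shows "u $$ (k, m) \<ge> 0"
proof -
  have u: "u \<in> weyl l C" and m: "m \<in> {..<l}"
    using assms unfolding min_rep_def by auto
  have "wlen l C u \<le> wlen l C (u * srefl l C m)"
    using assms weyl_sub_srefl unfolding min_rep_def by blast
  then have "len_in {..<l} (u * srefl l C m) > len_in {..<l} u"
    using len_in_mult_srefl[OF u _ m] unfolding wlen_eq_len_in by auto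
  then show ?thesis
    using ascent_column_nonneg[OF _ u m] assms(4) by auto
qed

text \<open>A column \<open>s \<in> S\<close> of \<open>v\<close> is \<open>\<le> 0\<close> and supported in \<open>S\<close>, so column \<open>s\<close> of \<open>u v\<close> would be
  both \<open>\<le> 0\<close> and \<open>\<ge> 0\<close>, hence zero: impossible for an invertible matrix.\<close>

lemma min_rep_mult_nontrivial:
  assumes S: "S \<subseteq> {..<l}" and u: "min_rep l C S u" and v: "v \<in> weyl_sub l C S" "v \<noteq> 1\<^sub>m l"
  shows "\<not> min_rep l C S (u * v)"
proof
  assume uv: "min_rep l C S (u * v)"
  have uc: "u \<in> carrier_mat l l" and uvW: "u * v \<in> weyl l C"
    using u uv weyl_sub_carrier unfolding min_rep_def by auto
  obtain s where s: "s \<in> S" and v_nonpos: "\<And>k. k < l \<Longrightarrow> v $$ (k, s) \<le> 0"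
    and v_outside: "\<And>k. k < l \<Longrightarrow> k \<notin> S \<Longrightarrow> v $$ (k, s) = 0"
    using weyl_sub_nontrivial_column[OF v(1) S v(2)] by blast
  have sl: "s < l" using s S by auto
  have "(u * v) $$ (k, s) = 0" if k: "k < l" for k
  proof -
    have "(u * v) $$ (k, s) = (\<Sum>m<l. u $$ (k, m) * v $$ (m, s))"
      using index_mult_lessThan[OF uc weyl_sub_carrier[OF v(1)] k sl] .
    also have "\<dots> \<le> 0"
    proof (rule sum_nonpos)
      fix m assume "m \<in> {..<l}"
      then show "u $$ (k, m) * v $$ (m, s) \<le> 0"
        using min_rep_column_nonneg[OF u S _ k] v_nonpos v_outside
        by (cases "m \<in> S") (simp_all add: mult_nonneg_nonpos)
    qed
    finally show ?thesis
      using min_rep_column_nonneg[OF uv S s k] by simp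
  qed
  then show False
    using weyl_column_nonzero[OF uvW sl] by blast
qed

lemma min_rep_unique:
  assumes S: "S \<subseteq> {..<l}" and u1: "min_rep l C S u1" and u2: "min_rep l C S u2"
    and v1: "v1 \<in> weyl_sub l C S" and v2: "v2 \<in> weyl_sub l C S" and eq: "u1 * v1 = u2 * v2"
  shows "u1 = u2"
proof -
  obtain v2' where v2': "v2' \<in> weyl_sub l C S" "v2 * v2' = 1\<^sub>m l"
    using weyl_sub_inverse[OF v2 S] by blast
  define v where "v = v1 * v2'"
  have v: "v \<in> weyl_sub l C S"
    unfolding v_def using v1 v2' weyl_sub_mult by blast
  have carriers: "u1 \<in> carrier_mat l l" "u2 \<in> carrier_mat l l" "v1 \<in> carrier_mat l l"
    "v2 \<in> carrier_mat l l" "v2' \<in> carrier_mat l l"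
    using u1 u2 v1 v2 v2' weyl_sub_carrier unfolding min_rep_def by auto
  have "u2 = (u2 * v2) * v2'"
    using v2' carriers by (simp add: assoc_mult_mat[of _ l l _ l _ l])
  also have "\<dots> = u1 * v"
    unfolding v_def eq[symmetric] using carriers by (simp add: assoc_mult_mat[of _ l l _ l _ l])
  finally show ?thesis
    using min_rep_mult_nontrivial[OF S u1 v] u2 carriers(1) by fastforce
qed

lemma min_rep_exists:
  assumes S: "S \<subseteq> {..<l}" and w: "w \<in> weyl l C"
  obtains u v where "min_rep l C S u" "v \<in> weyl_sub l C S" "w = u * v"
proof -
  obtain v0 where v0: "v0 \<in> weyl_sub l C S"
    and v0_min: "\<And>v. v \<in> weyl_sub l C S \<Longrightarrow> wlen l C (w * v0) \<le> wlen l C (w * v)"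
    using ex_has_least_nat[of "\<lambda>v. v \<in> weyl_sub l C S" "1\<^sub>m l" "\<lambda>v. wlen l C (w * v)"] weyl_sub_one
    by blast
  obtain v0' where v0': "v0' \<in> weyl_sub l C S" "v0 * v0' = 1\<^sub>m l"
    using weyl_sub_inverse[OF v0 S] by blast
  have carriers: "w \<in> carrier_mat l l" "v0 \<in> carrier_mat l l" "v0' \<in> carrier_mat l l"
    using w v0 v0' weyl_sub_carrier by auto
  have "min_rep l C S (w * v0)"
    unfolding min_rep_def
  proof (intro conjI ballI)
    show "w * v0 \<in> weyl l C"
      using w v0 weyl_sub_mono[OF S] weyl_sub_mult by blast
    fix v assume v: "v \<in> weyl_sub l C S"
    have "w * v0 * v = w * (v0 * v)"
      using carriers v weyl_sub_carrier by (simp add: assoc_mult_mat[of _ l l _ l _ l])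
    then show "wlen l C (w * v0) \<le> wlen l C (w * v0 * v)"
      using v0_min v0 v weyl_sub_mult by metis
  qed
  moreover have "w = w * v0 * v0'"
    using carriers v0' by (simp add: assoc_mult_mat[of _ l l _ l _ l])
  ultimately show thesis
    using that v0' by blast
qed

lemma coset_rep_eq:
  assumes S: "S \<subseteq> {..<l}" and u: "min_rep l C S u" and v: "v \<in> weyl_sub l C S"
  shows "coset_rep l C S (u * v) = u"
  unfolding coset_rep_def
proof (rule the_equality)
  fix u' assume "min_rep l C S u' \<and> (\<exists>v'\<in>weyl_sub l C S. u * v = u' * v')"
  then show "u' = u"
    using min_rep_unique[OF S u _ v] by blast
qed (use u v in blast)

lemma coset_part_eq:
  assumes S: "S \<subseteq> {..<l}" and u: "min_rep l C S u" and v: "v \<in> weyl_sub l C S"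
  shows "coset_part l C S (u * v) = v"
  unfolding coset_part_def coset_rep_eq[OF assms]
proof (rule the_equality)
  fix v' assume v': "v' \<in> weyl_sub l C S \<and> u * v = u * v'"
  have "u \<in> weyl l C"
    using u unfolding min_rep_def by blast
  then show "v' = v"
    using weyl_left_cancel weyl_sub_carrier v v' by metis
qed (use v in blast)

lemma coset_decomp:
  assumes S: "S \<subseteq> {..<l}" and w: "w \<in> weyl l C"
  shows "min_rep l C S (coset_rep l C S w)" "coset_part l C S w \<in> weyl_sub l C S"
    "w = coset_rep l C S w * coset_part l C S w"
proof -
  obtain u v where uv: "min_rep l C S u" "v \<in> weyl_sub l C S" "w = u * v"
    using min_rep_exists[OF assms] .
  then show "min_rep l C S (coset_rep l C S w)" "coset_part l C S w \<in> weyl_sub l C S"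
    "w = coset_rep l C S w * coset_part l C S w"
    using coset_rep_eq[OF S uv(1,2)] coset_part_eq[OF S uv(1,2)] by auto
qed

end

section \<open>Finiteness of the Weyl group\<close>

lemma qform_cong: "(\<And>i. i < n \<Longrightarrow> x i = y i) \<Longrightarrow> qform n A x = qform n A y"
  unfolding qform_def by simp

lemma qform_scale: "qform n A (\<lambda>i. t * x i) = t\<^sup>2 * qform n A x"
  unfolding qform_def by (simp add: sum_distrib_left power2_eq_square algebra_simps)

lemma qform_continuous:
  "continuous_map (product_topology (\<lambda>_. euclideanreal) {..<n}) euclideanreal (qform n A)"
  unfolding qform_def
proof (intro continuous_map_sum continuous_map_real_mult)
  fix i j assume "i \<in> {..<n}" "j \<in> {..<n}"
  then show "continuous_map (product_topology (\<lambda>_. euclideanreal) {..<n}) euclideanreal (\<lambda>x. x i)"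
    "continuous_map (product_topology (\<lambda>_. euclideanreal) {..<n}) euclideanreal (\<lambda>x. x j)"
    using continuous_map_product_projection[of _ "{..<n}" "\<lambda>_. euclideanreal"] by auto
qed auto

lemma sum_lessThan_single:
  fixes n :: nat
  assumes "j < n" "\<And>i. i < n \<Longrightarrow> i \<noteq> j \<Longrightarrow> g i = 0"
  shows "(\<Sum>i<n. g i) = g j"
  using assms sum.mono_neutral_right[of "{..<n}" "{j}" g] by auto

lemma qform_unit: "j < n \<Longrightarrow> qform n A (\<lambda>k. if k = j then 1 else 0) = A j j"
  unfolding qform_def by (subst sum_lessThan_single[of j]; simp)+

lemma qform_diff_unit:
  assumes "i < n"
  shows "qform n A (\<lambda>k. x k - t * (if k = i then 1 else 0))
    = qform n A x - t * (\<Sum>b<n. (A i b + A b i) * x b) + t\<^sup>2 * A i i"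
proof -
  define d :: "nat \<Rightarrow> real" where "d k = (if k = i then 1 else 0)" for k
  have "qform n A (\<lambda>k. x k - t * d k) = (\<Sum>a<n. \<Sum>b<n. x a * A a b * x b
      - t * (d a * A a b * x b + x a * A a b * d b) + t\<^sup>2 * (d a * A a b * d b))"
    unfolding qform_def by (intro sum.cong refl) (simp add: algebra_simps power2_eq_square)
  also have "\<dots> = qform n A x - t * (\<Sum>a<n. \<Sum>b<n. d a * A a b * x b + x a * A a b * d b)
      + t\<^sup>2 * qform n A d"
    unfolding qform_def by (simp add: sum.distrib sum_subtractf sum_distrib_left distrib_left)
  also have "(\<Sum>a<n. \<Sum>b<n. d a * A a b * x b + x a * A a b * d b) = (\<Sum>b<n. (A i b + A b i) * x b)"
  proof -
    have "(\<Sum>a<n. \<Sum>b<n. d a * A a b * x b) = (\<Sum>b<n. A i b * x b)"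
      using assms by (subst sum_lessThan_single[of i]) (simp_all add: d_def)
    moreover have "(\<Sum>a<n. \<Sum>b<n. x a * A a b * d b) = (\<Sum>a<n. A a i * x a)"
      using assms by (intro sum.cong refl, subst sum_lessThan_single[of i]) (simp_all add: d_def)
    ultimately show ?thesis
      by (simp add: sum.distrib algebra_simps)
  qed
  finally show ?thesis
    using qform_unit[OF assms] unfolding d_def by simp
qed

text \<open>A positive definite form is bounded below by \<open>c x\<^sub>k\<^sup>2\<close>: scale \<open>x\<close> so that its largest
  coordinate \<open>x\<^sub>j\<close> becomes \<open>1\<close>, and use compactness of the face \<open>{y \<in> [-1,1]\<^sup>n. y\<^sub>j = 1}\<close>.\<close>

definition unit_face :: "nat \<Rightarrow> nat \<Rightarrow> (nat \<Rightarrow> real) set" where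
  "unit_face n j = (\<Pi>\<^sub>E i\<in>{..<n}. if i = j then {1} else {-1..1})"

lemma qform_pos_on_unit_face:
  assumes pos_def: "\<And>x. \<exists>i<n. x i \<noteq> 0 \<Longrightarrow> qform n A x > 0" and j: "j < n"
  shows "\<exists>m>0. \<forall>y\<in>unit_face n j. qform n A y \<ge> m"
proof -
  have "compactin (product_topology (\<lambda>_. euclideanreal) {..<n}) (unit_face n j)"
    unfolding unit_face_def by (subst compactin_PiE) auto
  then have "compact (qform n A ` unit_face n j)"
    using image_compactin[OF _ qform_continuous] by simp
  moreover have "(\<lambda>i\<in>{..<n}. if i = j then 1 else 0) \<in> unit_face n j"
    unfolding unit_face_def by auto
  ultimately obtain y where y: "y \<in> unit_face n j" "\<forall>z\<in>unit_face n j. qform n A y \<le> qform n A z"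
    using compact_attains_inf[of "qform n A ` unit_face n j"] by blast
  have "y j = 1"
    using PiE_mem[OF y(1)[unfolded unit_face_def], of j] j by simp
  then have "qform n A y > 0"
    using pos_def[of y] j by force
  then show ?thesis
    using y by blast
qed

lemma qform_ge_max_coord:
  assumes m: "\<And>y. y \<in> unit_face n j \<Longrightarrow> qform n A y \<ge> m" and j: "j < n"
    and x_le: "\<And>i. i < n \<Longrightarrow> \<bar>x i\<bar> \<le> \<bar>x j\<bar>"
  shows "qform n A x \<ge> m * (x j)\<^sup>2"
proof (cases "x j = 0")
  case True
  then have "qform n A x = qform n A (\<lambda>_. 0)"
    using x_le by (intro qform_cong) fastforce
  then show ?thesis
    using True by (simp add: qform_def)
next
  case False
  define y where "y = (\<lambda>i\<in>{..<n}. x i / x j)"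
  have "y \<in> unit_face n j"
    unfolding unit_face_def
  proof (rule PiE_I)
    fix i assume "i \<in> {..<n}"
    then have "\<bar>x i / x j\<bar> \<le> 1"
      using x_le False by (simp add: abs_divide divide_le_eq_1)
    then have "x i / x j \<in> {-1..1}"
      using abs_le_D1 abs_le_D2 by fastforce
    then show "y i \<in> (if i = j then {1} else {-1..1})"
      using \<open>i \<in> {..<n}\<close> False unfolding y_def by auto
  qed (simp add: y_def)
  then have "m * (x j)\<^sup>2 \<le> qform n A y * (x j)\<^sup>2"
    using m by (simp add: mult_right_mono)
  moreover have "qform n A x = qform n A y * (x j)\<^sup>2"
    using qform_scale[of n A "x j" y] qform_cong[of n x "\<lambda>i. x j * y i" A] False
    by (simp add: y_def mult.commute)
  ultimately show ?thesis
    by simp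
qed

lemma qform_coercive:
  assumes pos_def: "\<And>x. \<exists>i<n. x i \<noteq> 0 \<Longrightarrow> qform n A x > 0"
  obtains c where "c > 0" "\<And>x k. k < n \<Longrightarrow> qform n A x \<ge> c * (x k)\<^sup>2"
proof (cases "n = 0")
  case True
  then show ?thesis using that[of 1] by simp
next
  case False
  have "\<forall>j. \<exists>m. j < n \<longrightarrow> m > 0 \<and> (\<forall>y\<in>unit_face n j. qform n A y \<ge> m)"
    using qform_pos_on_unit_face[of n A] pos_def by blast
  then obtain m where m: "\<And>j. j < n \<Longrightarrow> m j > 0" "\<And>j y. j < n \<Longrightarrow> y \<in> unit_face n j \<Longrightarrow> qform n A y \<ge> m j"
    by (metis choice)
  define c where "c = Min (m ` {..<n})"
  have c_pos: "c > 0"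
    unfolding c_def using False m(1) by (subst Min_gr_iff) auto
  have "qform n A x \<ge> c * (x k)\<^sup>2" if k: "k < n" for x k
  proof -
    have "Max ((\<lambda>i. \<bar>x i\<bar>) ` {..<n}) \<in> (\<lambda>i. \<bar>x i\<bar>) ` {..<n}"
      using False by (intro Max_in) auto
    then obtain j where j: "j < n" "\<bar>x j\<bar> = Max ((\<lambda>i. \<bar>x i\<bar>) ` {..<n})"
      by auto
    then have x_le: "\<bar>x i\<bar> \<le> \<bar>x j\<bar>" if "i < n" for i
      using that by simp
    have "(x k)\<^sup>2 \<le> (x j)\<^sup>2"
      using x_le[OF k] abs_le_square_iff by blast
    then have "c * (x k)\<^sup>2 \<le> c * (x j)\<^sup>2"
      using c_pos by (simp add: mult_left_mono)
    also have "\<dots> \<le> m j * (x j)\<^sup>2"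
      unfolding c_def using j(1) by (intro mult_right_mono Min_le) auto
    also have "\<dots> \<le> qform n A x"
      by (rule qform_ge_max_coord) (simp_all add: m(2) j(1) x_le)
    finally show ?thesis .
  qed
  then show ?thesis using that c_pos by blast
qed

lemma abs_le_square_int: "\<bar>z\<bar> \<le> (z::int)\<^sup>2"
proof (cases "z = 0")
  case False
  then have "\<bar>z\<bar> * 1 \<le> \<bar>z\<bar> * \<bar>z\<bar>"
    by (intro mult_left_mono) auto
  then show ?thesis by (simp add: power2_eq_square abs_mult_self_eq)
qed simp

context cartan
begin

lemma qform_refl_coords:
  assumes e_sym: "\<And>i j. i < l \<Longrightarrow> j < l \<Longrightarrow> of_int (C i j) * e j = of_int (C j i) * e i"
    and i: "i < l"
  shows "qform l (\<lambda>i j. of_int (C i j) * e j) (\<lambda>k. of_int (refl_coords i x k))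
    = qform l (\<lambda>i j. of_int (C i j) * e j) (\<lambda>k. of_int (x k))"
proof -
  let ?A = "\<lambda>i j. of_int (C i j) * e j :: real"
  define t where "t = real_of_int (coroot_pairing i x)"
  have "(\<lambda>k. real_of_int (refl_coords i x k)) = (\<lambda>k. of_int (x k) - t * (if k = i then 1 else 0))"
    unfolding refl_coords_def t_def by auto
  moreover have "(\<Sum>b<l. (?A i b + ?A b i) * of_int (x b)) = 2 * e i * t"
  proof -
    have "(\<Sum>b<l. (?A i b + ?A b i) * of_int (x b)) = (\<Sum>b<l. 2 * e i * (of_int (C b i) * of_int (x b)))"
    proof (rule sum.cong[OF refl])
      fix b assume "b \<in> {..<l}"
      then have "?A i b = of_int (C b i) * e i"
        using e_sym[OF i] by simp
      then show "(?A i b + ?A b i) * of_int (x b) = 2 * e i * (of_int (C b i) * of_int (x b))"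
        by (simp add: algebra_simps)
    qed
    then show ?thesis
      unfolding t_def coroot_pairing_def by (simp add: sum_distrib_left)
  qed
  ultimately have "qform l ?A (\<lambda>k. of_int (refl_coords i x k))
      = qform l ?A (\<lambda>k. of_int (x k)) - t * (2 * e i * t) + t\<^sup>2 * ?A i i"
    using qform_diff_unit[OF i, of ?A "\<lambda>k. of_int (x k)" t] by simp
  then show ?thesis
    using C_diag[OF i] by (simp add: power2_eq_square)
qed

lemma qform_weyl_column:
  assumes e_sym: "\<And>i j. i < l \<Longrightarrow> j < l \<Longrightarrow> of_int (C i j) * e j = of_int (C j i) * e i"
    and w: "w \<in> weyl l C" and j: "j < l"
  shows "qform l (\<lambda>i j. of_int (C i j) * e j) (\<lambda>k. of_int (w $$ (k, j))) = 2 * e j"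
proof -
  let ?A = "\<lambda>i j. of_int (C i j) * e j :: real"
  obtain ws where ws: "set ws \<subseteq> {..<l}" "word_prod l C ws = w"
    using w weyl_subE by blast
  have "qform l ?A (\<lambda>k. of_int (word_coords ws (simple_root j) k)) = 2 * e j"
    using ws(1)
  proof (induction ws)
    case Nil
    then show ?case
      using qform_unit[OF j, of ?A] C_diag[OF j] by (simp add: simple_root_def if_distrib cong: if_cong)
  next
    case (Cons i ws)
    then show ?case using qform_refl_coords[OF e_sym] by simp
  qed
  moreover have "qform l ?A (\<lambda>k. of_int (w $$ (k, j)))
      = qform l ?A (\<lambda>k. of_int (word_coords ws (simple_root j) k))"
    using ws j word_prod_index by (intro qform_cong) auto
  ultimately show ?thesis by simp
qed

lemma weyl_entries_bounded: "\<exists>N. \<forall>w\<in>weyl l C. \<forall>k<l. \<forall>j<l. \<bar>w $$ (k, j)\<bar> \<le> N"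
proof -
  obtain e :: "nat \<Rightarrow> real" where e_pos: "\<And>i. i < l \<Longrightarrow> e i > 0"
    and e_sym: "\<And>i j. i < l \<Longrightarrow> j < l \<Longrightarrow> of_int (C i j) * e j = of_int (C j i) * e i"
    and pos_def: "\<And>x. \<exists>i<l. x i \<noteq> 0 \<Longrightarrow> qform l (\<lambda>i j. of_int (C i j) * e j) x > 0"
    using cartan_form by blast
  obtain c where c: "c > 0" "\<And>x k. k < l \<Longrightarrow> qform l (\<lambda>i j. of_int (C i j) * e j) x \<ge> c * (x k)\<^sup>2"
    using qform_coercive[OF pos_def] by blast
  define M where "M = (\<Sum>j<l. 2 * e j / c)"
  have "\<bar>w $$ (k, j)\<bar> \<le> \<lceil>M\<rceil>" if w: "w \<in> weyl l C" and k: "k < l" and j: "j < l" for w k j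
  proof -
    have "c * (of_int (w $$ (k, j)))\<^sup>2 \<le> 2 * e j"
      using c(2)[OF k, of "\<lambda>k. of_int (w $$ (k, j))"] qform_weyl_column[OF e_sym w j] by simp
    then have "(of_int (w $$ (k, j)))\<^sup>2 \<le> 2 * e j / c"
      using c(1) by (simp add: field_simps)
    also have "\<dots> \<le> M"
      unfolding M_def using j e_pos c(1) by (intro member_le_sum) (auto intro: less_imp_le)
    moreover have "real_of_int \<bar>w $$ (k, j)\<bar> \<le> (of_int (w $$ (k, j)))\<^sup>2"
      using abs_le_square_int[of "w $$ (k, j)"] by (metis of_int_le_iff of_int_power)
    ultimately have "real_of_int \<bar>w $$ (k, j)\<bar> \<le> M"
      by linarith
    then show ?thesis by linarith
  qed
  then show ?thesis by blast
qed

lemma finite_weyl: "finite (weyl l C)"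
proof -
  obtain N where N: "\<And>w k j. w \<in> weyl l C \<Longrightarrow> k < l \<Longrightarrow> j < l \<Longrightarrow> \<bar>w $$ (k, j)\<bar> \<le> N"
    using weyl_entries_bounded by blast
  have "weyl l C \<subseteq> (\<lambda>f. mat l l f) ` (\<Pi>\<^sub>E p\<in>{..<l} \<times> {..<l}. {-N..N})"
  proof
    fix w assume w: "w \<in> weyl l C"
    define f where "f = (\<lambda>p\<in>{..<l} \<times> {..<l}. w $$ p)"
    have "f \<in> (\<Pi>\<^sub>E p\<in>{..<l} \<times> {..<l}. {-N..N})"
    proof (rule PiE_I)
      fix p assume "p \<in> {..<l} \<times> {..<l}"
      then show "f p \<in> {-N..N}"
        using N[OF w, of "fst p" "snd p"] by (auto simp: f_def abs_le_iff)
    qed (simp add: f_def)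
    moreover have "mat l l f = w"
      using weyl_sub_carrier[OF w] by (intro eq_matI) (auto simp: f_def)
    ultimately show "w \<in> (\<lambda>f. mat l l f) ` (\<Pi>\<^sub>E p\<in>{..<l} \<times> {..<l}. {-N..N})"
      by force
  qed
  then show ?thesis
    by (rule finite_subset) (intro finite_imageI finite_PiE; simp)
qed

end

section \<open>The twisted action of \<open>W\<^sub>S\<close> on sign functions\<close>

lemma mult_signs: "a \<in> {-1, 1} \<Longrightarrow> b \<in> {-1, 1} \<Longrightarrow> a * b \<in> {-1, 1::int}"
  by auto

lemma prod_signs: "(\<And>k. k \<in> A \<Longrightarrow> f k \<in> {-1, 1}) \<Longrightarrow> (\<Prod>k\<in>A. f k) \<in> {-1, 1::int}"
proof (induction A rule: infinite_finite_induct)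
  case (insert x F)
  then show ?case using mult_signs[of "f x" "prod f F"] by simp
qed simp_all

text \<open>\<open>sign_power \<epsilon> a\<close> is \<open>\<epsilon>\<^sup>a\<close> for \<open>\<epsilon> = \<plusminus>1\<close> and an arbitrary integer exponent.\<close>

definition sign_power :: "int \<Rightarrow> int \<Rightarrow> int" where
  "sign_power \<epsilon> a = (if even a then 1 else \<epsilon>)"

lemma sign_power_eq_power: "\<epsilon> \<in> {-1, 1} \<Longrightarrow> \<epsilon> ^ nat \<bar>a\<bar> = sign_power \<epsilon> a"
  unfolding sign_power_def by (auto simp: even_nat_iff)

lemma sign_power_signs: "\<epsilon> \<in> {-1, 1} \<Longrightarrow> sign_power \<epsilon> a \<in> {-1, 1}"
  unfolding sign_power_def by auto

lemma sign_power_diff: "\<epsilon> \<in> {-1, 1} \<Longrightarrow> sign_power \<epsilon> (a - b) = sign_power \<epsilon> a * sign_power \<epsilon> b"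
  unfolding sign_power_def by auto

lemma sign_power_mult: "sign_power \<epsilon> (a * c) = sign_power (sign_power \<epsilon> a) c"
  unfolding sign_power_def by auto

lemma prod_sign_power_mult:
  "(\<Prod>k\<in>A. sign_power (\<epsilon> k) (a k * c)) = sign_power (\<Prod>k\<in>A. sign_power (\<epsilon> k) (a k)) c"
  unfolding sign_power_mult by (simp add: sign_power_def)

lemma dset_signs: "\<eta> \<in> dset S \<Longrightarrow> k \<in> S \<Longrightarrow> \<eta> k \<in> {-1, 1}"
  unfolding dset_def by auto

lemma dset_outside: "\<eta> \<in> dset S \<Longrightarrow> k \<notin> S \<Longrightarrow> \<eta> k = undefined"
  unfolding dset_def by auto

lemma dsetI: "(\<And>k. k \<in> S \<Longrightarrow> \<eta> k \<in> {-1, 1}) \<Longrightarrow> (\<And>k. k \<notin> S \<Longrightarrow> \<eta> k = undefined) \<Longrightarrow> \<eta> \<in> dset S"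
  unfolding dset_def by auto

lemma fun_upd_in_dset:
  assumes "\<eta> \<in> dset S" "\<epsilon> \<in> {-1, 1}"
  shows "\<eta>(a := \<epsilon>) \<in> dset (insert a S)"
proof (rule dsetI)
  fix k assume "k \<in> insert a S"
  then show "(\<eta>(a := \<epsilon>)) k \<in> {-1, 1}"
    using dset_signs[OF assms(1)] assms(2) by auto
qed (use dset_outside[OF assms(1)] in auto)

text \<open>Extending \<open>\<eta> \<in> D(S)\<close> multiplicatively to the root lattice of \<open>S\<close> gives a character
  \<open>lattice_char S \<eta>\<close>, evaluated on a coordinate vector (coordinates outside \<open>S\<close> are ignored).\<close>

definition lattice_char :: "nat set \<Rightarrow> (nat \<Rightarrow> int) \<Rightarrow> (nat \<Rightarrow> int) \<Rightarrow> int" where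
  "lattice_char S \<eta> x = (\<Prod>k\<in>S. sign_power (\<eta> k) (x k))"

lemma lattice_char_signs: "\<eta> \<in> dset S \<Longrightarrow> lattice_char S \<eta> x \<in> {-1, 1}"
  unfolding lattice_char_def by (intro prod_signs sign_power_signs dset_signs)

lemma lattice_char_diff:
  assumes "\<eta> \<in> dset S"
  shows "lattice_char S \<eta> (\<lambda>k. x k - y k) = lattice_char S \<eta> x * lattice_char S \<eta> y"
  unfolding lattice_char_def prod.distrib[symmetric]
  by (rule prod.cong[OF refl]) (rule sign_power_diff[OF dset_signs[OF assms]])

lemma lattice_char_mult_const: "lattice_char S \<eta> (\<lambda>k. x k * c) = sign_power (lattice_char S \<eta> x) c"
  unfolding lattice_char_def by (rule prod_sign_power_mult)

lemma lattice_char_cong: "(\<And>k. k \<in> S \<Longrightarrow> x k = y k) \<Longrightarrow> lattice_char S \<eta> x = lattice_char S \<eta> y"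
  unfolding lattice_char_def by simp

lemma lattice_char_insert:
  assumes "finite S" "a \<notin> S"
  shows "lattice_char (insert a S) (\<eta>(a := \<epsilon>)) x = sign_power \<epsilon> (x a) * lattice_char S \<eta> x"
proof -
  have "(\<Prod>k\<in>S. sign_power ((\<eta>(a := \<epsilon>)) k) (x k)) = (\<Prod>k\<in>S. sign_power (\<eta> k) (x k))"
    using assms(2) by (intro prod.cong) auto
  then show ?thesis
    unfolding lattice_char_def using assms by simp
qed

context simple_reflections
begin

text \<open>For \<open>v \<in> W\<^sub>S\<close> with inverse \<open>M\<close>: \<open>(v\<eta>)(\<alpha>\<^sub>j)\<close> is the character of \<open>\<eta>\<close> on \<open>M \<alpha>\<^sub>j\<close>, and the scalar
  \<open>\<plusminus>1\<close> is its value on \<open>M\<close> applied to the sum of the simple roots outside \<open>S\<close>.\<close>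

definition sign_transform :: "nat set \<Rightarrow> (nat \<Rightarrow> int) \<Rightarrow> int mat \<Rightarrow> nat \<Rightarrow> int" where
  "sign_transform S \<eta> M = (\<lambda>j. if j \<in> S then lattice_char S \<eta> (\<lambda>k. M $$ (k, j)) else undefined)"

definition sign_factor :: "nat set \<Rightarrow> (nat \<Rightarrow> int) \<Rightarrow> int mat \<Rightarrow> int" where
  "sign_factor S \<eta> M = lattice_char S \<eta> (\<lambda>k. \<Sum>m\<in>{..<l} - S. M $$ (k, m))"

lemma sign_transform_dset: "\<eta> \<in> dset S \<Longrightarrow> sign_transform S \<eta> M \<in> dset S"
  unfolding sign_transform_def by (rule dsetI) (use lattice_char_signs in auto)

lemma sign_factor_signs: "\<eta> \<in> dset S \<Longrightarrow> sign_factor S \<eta> M \<in> {-1, 1}"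
  unfolding sign_factor_def by (rule lattice_char_signs)

lemma sign_transform_one:
  assumes "S \<subseteq> {..<l}" "\<eta> \<in> dset S"
  shows "sign_transform S \<eta> (1\<^sub>m l) = \<eta>"
proof
  fix j
  show "sign_transform S \<eta> (1\<^sub>m l) j = \<eta> j"
  proof (cases "j \<in> S")
    case True
    have "lattice_char S \<eta> (\<lambda>k. 1\<^sub>m l $$ (k, j)) = (\<Prod>k\<in>S. if k = j then \<eta> k else 1)"
      unfolding lattice_char_def using True assms(1) by (intro prod.cong) (auto simp: sign_power_def subset_iff)
    also have "\<dots> = \<eta> j"
      using True assms(1) by (simp add: finite_subset)
    finally show ?thesis
      unfolding sign_transform_def using True by simp
  qed (simp add: sign_transform_def dset_outside[OF assms(2)])
qed

lemma sign_factor_one: "S \<subseteq> {..<l} \<Longrightarrow> sign_factor S \<eta> (1\<^sub>m l) = 1"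
  unfolding sign_factor_def lattice_char_def by (intro prod.neutral) (auto simp: sign_power_def)

lemma rcount_power:
  assumes "\<epsilon> \<in> {-1, 1}"
  shows "\<epsilon> ^ rcount l C S i = sign_power \<epsilon> (\<Sum>m\<in>{..<l} - S. C m i)"
proof -
  have "even (rcount l C S i) \<longleftrightarrow> even (\<Sum>m\<in>{..<l} - S. C m i)"
    unfolding rcount_def using even_sum_iff[of "{..<l} - S" "\<lambda>m. C m i"] by simp
  then show ?thesis
    using assms unfolding sign_power_def by auto
qed

lemma sign_transform_mult_srefl:
  assumes "S \<subseteq> {..<l}" "i \<in> S" "M \<in> carrier_mat l l" "\<eta> \<in> dset S"
  shows "sign_transform S \<eta> (M * srefl l C i) = sfun C S i (sign_transform S \<eta> M)"
proof
  fix j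
  show "sign_transform S \<eta> (M * srefl l C i) j = sfun C S i (sign_transform S \<eta> M) j"
  proof (cases "j \<in> S")
    case True
    have "lattice_char S \<eta> (\<lambda>k. (M * srefl l C i) $$ (k, j))
        = lattice_char S \<eta> (\<lambda>k. M $$ (k, j) - M $$ (k, i) * C j i)"
      using assms True by (intro lattice_char_cong) (auto intro!: index_mult_srefl)
    also have "\<dots> = sign_transform S \<eta> M j * sign_power (sign_transform S \<eta> M i) (C j i)"
      unfolding sign_transform_def using assms True
      by (simp add: lattice_char_diff lattice_char_mult_const)
    finally show ?thesis
      unfolding sfun_def using True assms
      by (simp add: sign_transform_def sign_power_eq_power[OF lattice_char_signs[OF assms(4)]])
  qed (simp add: sign_transform_def sfun_def)
qed

lemma sign_factor_mult_srefl:
  assumes "S \<subseteq> {..<l}" "i \<in> S" "M \<in> carrier_mat l l" "\<eta> \<in> dset S"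
  shows "sign_factor S \<eta> (M * srefl l C i) = sign_factor S \<eta> M * sign_transform S \<eta> M i ^ rcount l C S i"
proof -
  have "sign_factor S \<eta> (M * srefl l C i)
      = lattice_char S \<eta> (\<lambda>k. (\<Sum>m\<in>{..<l} - S. M $$ (k, m)) - M $$ (k, i) * (\<Sum>m\<in>{..<l} - S. C m i))"
  proof (unfold sign_factor_def, intro lattice_char_cong)
    fix k assume "k \<in> S"
    then have "(M * srefl l C i) $$ (k, m) = M $$ (k, m) - M $$ (k, i) * C m i" if "m \<in> {..<l} - S" for m
      using assms that by (intro index_mult_srefl) auto
    then show "(\<Sum>m\<in>{..<l} - S. (M * srefl l C i) $$ (k, m))
        = (\<Sum>m\<in>{..<l} - S. M $$ (k, m)) - M $$ (k, i) * (\<Sum>m\<in>{..<l} - S. C m i)"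
      by (simp add: sum_subtractf sum_distrib_left)
  qed
  then show ?thesis
    using assms by (simp add: lattice_char_diff lattice_char_mult_const sign_factor_def
        sign_transform_def rcount_power[OF lattice_char_signs[OF assms(4)]])
qed

lemma word_act_eq:
  assumes "S \<subseteq> {..<l}" "set ws \<subseteq> S" "\<eta> \<in> dset S"
  shows "word_act l C S ws \<eta>
    = (sign_factor S \<eta> (word_prod l C (rev ws)), sign_transform S \<eta> (word_prod l C (rev ws)))"
  using assms(2)
proof (induction ws)
  case Nil
  then show ?case
    using sign_factor_one sign_transform_one assms by (simp add: word_act_def)
next
  case (Cons i ws)
  have rev: "word_prod l C (rev ws @ [i]) = word_prod l C (rev ws) * srefl l C i"
    by (simp add: word_prod_append)
  have "word_act l C S (i # ws) \<eta> = sact l C S i (word_act l C S ws \<eta>)"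
    unfolding word_act_def by simp
  then show ?case
    using Cons assms by (simp add: rev sact_def sign_transform_mult_srefl sign_factor_mult_srefl)
qed

lemma word_act_append:
  "word_act l C S (xs @ ys) \<eta> = (fst (word_act l C S ys \<eta>) * fst (word_act l C S xs (snd (word_act l C S ys \<eta>))),
     snd (word_act l C S xs (snd (word_act l C S ys \<eta>))))"
proof -
  have "foldr (sact l C S) xs (e, \<eta>') = (e * fst (word_act l C S xs \<eta>'), snd (word_act l C S xs \<eta>'))"
    for e \<eta>'
    unfolding word_act_def by (induction xs) (auto simp: sact_def split: prod.splits)
  then show ?thesis
    unfolding word_act_def by (metis foldr_append prod.collapse)
qed

end

context cartan
begin

lemma word_prod_rev_eq:
  assumes "set xs \<subseteq> {..<l}" "set ys \<subseteq> {..<l}" "word_prod l C xs = word_prod l C ys"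
  shows "word_prod l C (rev xs) = word_prod l C (rev ys)"
  using weyl_left_cancel[of "word_prod l C xs" "word_prod l C (rev xs)" "word_prod l C (rev ys)"]
    word_prod_mult_rev[OF assms(1)] word_prod_mult_rev[OF assms(2)] assms weyl_subI[OF assms(1)]
  by simp

lemma wsact_word_prod:
  assumes "S \<subseteq> {..<l}" "set ws \<subseteq> S" "\<eta> \<in> dset S"
  shows "wsact l C S (word_prod l C ws) \<eta> = word_act l C S ws \<eta>"
proof -
  let ?P = "\<lambda>ws'. set ws' \<subseteq> S \<and> word_prod l C ws' = word_prod l C ws"
  have P: "?P (SOME ws'. ?P ws')"
    using someI[of ?P ws] assms(2) by blast
  then have "word_prod l C (rev (SOME ws'. ?P ws')) = word_prod l C (rev ws)"
    using word_prod_rev_eq assms by (meson order_trans)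
  then show ?thesis
    unfolding wsact_def using word_act_eq[OF assms(1) _ assms(3)] P assms(2) by simp
qed

lemma wsact_eq:
  assumes S: "S \<subseteq> {..<l}" and v: "v \<in> weyl_sub l C S" and v': "v * v' = 1\<^sub>m l" "v' \<in> carrier_mat l l"
    and \<eta>: "\<eta> \<in> dset S"
  shows "wsact l C S v \<eta> = (sign_factor S \<eta> v', sign_transform S \<eta> v')"
proof -
  obtain ws where ws: "set ws \<subseteq> S" "word_prod l C ws = v"
    using v weyl_subE by blast
  have "word_prod l C (rev ws) = v'"
    using weyl_left_cancel[of v] v weyl_sub_mono[OF S] word_prod_mult_rev[of ws] ws S v' by auto
  then show ?thesis
    using wsact_word_prod[OF S ws(1) \<eta>] word_act_eq[OF S ws(1) \<eta>] ws(2) by simp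
qed

lemma wsact_dset:
  assumes "S \<subseteq> {..<l}" "v \<in> weyl_sub l C S" "\<eta> \<in> dset S"
  shows "snd (wsact l C S v \<eta>) \<in> dset S" "fst (wsact l C S v \<eta>) \<in> {-1, 1}"
proof -
  obtain v' where "v' \<in> weyl_sub l C S" "v * v' = 1\<^sub>m l"
    using weyl_sub_inverse[OF assms(2,1)] by blast
  then show "snd (wsact l C S v \<eta>) \<in> dset S" "fst (wsact l C S v \<eta>) \<in> {-1, 1}"
    using wsact_eq[OF assms(1,2)] weyl_sub_carrier assms(3) sign_transform_dset sign_factor_signs by auto
qed

lemma wsact_mult:
  assumes S: "S \<subseteq> {..<l}" and p: "p \<in> weyl_sub l C S" and v: "v \<in> weyl_sub l C S"
    and \<eta>: "\<eta> \<in> dset S"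
  shows "wsact l C S (p * v) \<eta> = (fst (wsact l C S v \<eta>) * fst (wsact l C S p (snd (wsact l C S v \<eta>))),
            snd (wsact l C S p (snd (wsact l C S v \<eta>))))"
proof -
  obtain ps where ps: "set ps \<subseteq> S" "word_prod l C ps = p"
    using p weyl_subE by blast
  obtain vs where vs: "set vs \<subseteq> S" "word_prod l C vs = v"
    using v weyl_subE by blast
  have "snd (wsact l C S v \<eta>) \<in> dset S"
    using wsact_dset(1)[OF S v \<eta>] .
  then show ?thesis
    using wsact_word_prod[OF S _ \<eta>, of "ps @ vs"] wsact_word_prod[OF S vs(1) \<eta>] wsact_word_prod[OF S ps(1)]
      ps vs word_act_append by (simp add: word_prod_append)
qed

lemma sign_factor_insert:
  assumes S: "S \<subseteq> {..<l}" and a: "a < l" "a \<notin> S" and M: "M \<in> weyl_sub l C S"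
    and \<eta>: "\<eta> \<in> dset S"
  shows "sign_factor (insert a S) (\<eta>(a := \<epsilon>)) M = sign_factor S \<eta> M * lattice_char S \<eta> (\<lambda>k. M $$ (k, a))"
proof -
  have "(\<Sum>m\<in>{..<l} - insert a S. M $$ (a, m)) = 0"
    using weyl_sub_index_outside[OF M a(1) _ a(2) S] by (intro sum.neutral) auto
  then have "sign_factor (insert a S) (\<eta>(a := \<epsilon>)) M
      = lattice_char S \<eta> (\<lambda>k. \<Sum>m\<in>{..<l} - insert a S. M $$ (k, m))"
    unfolding sign_factor_def using finite_subset[OF S] a(2)
    by (simp add: lattice_char_insert sign_power_def)
  also have "\<dots> = lattice_char S \<eta> (\<lambda>k. (\<Sum>m\<in>{..<l} - S. M $$ (k, m)) - M $$ (k, a))"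
  proof (rule lattice_char_cong)
    fix k
    have "{..<l} - insert a S = ({..<l} - S) - {a}"
      by auto
    then show "(\<Sum>m\<in>{..<l} - insert a S. M $$ (k, m)) = (\<Sum>m\<in>{..<l} - S. M $$ (k, m)) - M $$ (k, a)"
      using a by (simp add: sum_diff1)
  qed
  finally show ?thesis
    unfolding sign_factor_def using \<eta> by (simp add: lattice_char_diff)
qed

lemma sign_transform_insert:
  assumes S: "S \<subseteq> {..<l}" and a: "a < l" "a \<notin> S" and M: "M \<in> weyl_sub l C S"
  shows "sign_transform (insert a S) (\<eta>(a := \<epsilon>)) M
    = (sign_transform S \<eta> M)(a := \<epsilon> * lattice_char S \<eta> (\<lambda>k. M $$ (k, a)))"
proof
  fix j
  have row_a: "M $$ (a, j) = (if a = j then 1 else 0)" if "j < l"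
    using weyl_sub_index_outside[OF M a(1) that a(2) S] .
  have col: "lattice_char (insert a S) (\<eta>(a := \<epsilon>)) (\<lambda>k. M $$ (k, j))
      = sign_power \<epsilon> (M $$ (a, j)) * lattice_char S \<eta> (\<lambda>k. M $$ (k, j))"
    using lattice_char_insert[OF finite_subset[OF S] a(2)] by simp
  show "sign_transform (insert a S) (\<eta>(a := \<epsilon>)) M j
      = ((sign_transform S \<eta> M)(a := \<epsilon> * lattice_char S \<eta> (\<lambda>k. M $$ (k, a)))) j"
  proof (cases "j = a")
    case True
    then show ?thesis
      unfolding sign_transform_def col using row_a a(1) by (simp add: sign_power_def)
  next
    case False
    moreover have "j \<in> S \<Longrightarrow> M $$ (a, j) = 0"
      using row_a S False by auto
    ultimately show ?thesis
      unfolding sign_transform_def col by (simp add: sign_power_def)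
  qed
qed

end

section \<open>Finitely supported chains\<close>

definition finite_support :: "('a \<Rightarrow> int) \<Rightarrow> bool" where
  "finite_support f \<longleftrightarrow> finite {x. f x \<noteq> 0}"

definition single :: "'a \<Rightarrow> int \<Rightarrow> 'a \<Rightarrow> int" where
  "single x e = (\<lambda>y. if y = x then e else 0)"

lemma finite_support_single [simp]: "finite_support (single x e)"
  unfolding finite_support_def single_def by (rule finite_subset[of _ "{x}"]) auto

lemma finite_support_lin:
  "finite_support f \<Longrightarrow> finite_support g \<Longrightarrow> finite_support (\<lambda>x. a * f x + b * g x)"
  unfolding finite_support_def by (rule finite_subset[of _ "{x. f x \<noteq> 0} \<union> {x. g x \<noteq> 0}"]) auto

lemma finite_support_scale: "finite_support f \<Longrightarrow> finite_support (\<lambda>x. a * f x)"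
  unfolding finite_support_def by (rule finite_subset[of _ "{x. f x \<noteq> 0}"]) auto

lemma finite_support_sum:
  "finite I \<Longrightarrow> (\<And>i. i \<in> I \<Longrightarrow> finite_support (h i)) \<Longrightarrow> finite_support (\<lambda>x. \<Sum>i\<in>I. h i x)"
proof (induction I rule: finite_induct)
  case empty
  then show ?case by (simp add: finite_support_def)
next
  case (insert i I)
  then show ?case
    using finite_support_lin[of "h i" "\<lambda>x. \<Sum>i\<in>I. h i x" 1 1] by simp
qed

lemma linext_eq:
  assumes "finite A" "{x. f x \<noteq> 0} \<subseteq> A"
  shows "linext F f y = (\<Sum>x\<in>A. f x * F x y)"
  unfolding linext_def using assms by (intro sum.mono_neutral_left) auto

lemma linext_lin:
  assumes "finite_support f" "finite_support g"
  shows "linext F (\<lambda>x. a * f x + b * g x) = (\<lambda>y. a * linext F f y + b * linext F g y)"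
proof
  fix y
  let ?A = "{x. f x \<noteq> 0} \<union> {x. g x \<noteq> 0}"
  have fin: "finite ?A"
    using assms unfolding finite_support_def by auto
  have "linext F (\<lambda>x. a * f x + b * g x) y = (\<Sum>x\<in>?A. (a * f x + b * g x) * F x y)"
    by (rule linext_eq[OF fin]) auto
  also have "\<dots> = a * (\<Sum>x\<in>?A. f x * F x y) + b * (\<Sum>x\<in>?A. g x * F x y)"
    by (simp add: sum.distrib sum_distrib_left algebra_simps)
  also have "\<dots> = a * linext F f y + b * linext F g y"
    using linext_eq[OF fin, of f F y] linext_eq[OF fin, of g F y] by auto
  finally show "linext F (\<lambda>x. a * f x + b * g x) y = a * linext F f y + b * linext F g y" .
qed

lemma linext_scale: "finite_support f \<Longrightarrow> linext F (\<lambda>x. a * f x) = (\<lambda>y. a * linext F f y)"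
  using linext_lin[of f "\<lambda>_. 0" F a 0] by (simp add: finite_support_def)

lemma linext_single: "linext F (single x e) = (\<lambda>y. e * F x y)"
proof
  fix y
  have "linext F (single x e) y = (\<Sum>z\<in>{x}. single x e z * F z y)"
    by (rule linext_eq) (auto simp: single_def)
  then show "linext F (single x e) y = e * F x y"
    by (simp add: single_def)
qed

lemma linext_sum:
  "finite I \<Longrightarrow> (\<And>i. i \<in> I \<Longrightarrow> finite_support (h i)) \<Longrightarrow>
    linext F (\<lambda>x. \<Sum>i\<in>I. h i x) = (\<lambda>y. \<Sum>i\<in>I. linext F (h i) y)"
proof (induction I rule: finite_induct)
  case empty
  then show ?case unfolding linext_def by simp
next
  case (insert i I)
  have "finite_support (\<lambda>x. \<Sum>i\<in>I. h i x)"
    using insert by (intro finite_support_sum) auto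
  then show ?case
    using insert linext_lin[of "h i" "\<lambda>x. \<Sum>i\<in>I. h i x" F 1 1] by simp
qed

lemma linext_sum_scale:
  assumes "finite I" "\<And>i. i \<in> I \<Longrightarrow> finite_support (h i)"
  shows "linext F (\<lambda>x. \<Sum>i\<in>I. c i * h i x) = (\<lambda>y. \<Sum>i\<in>I. c i * linext F (h i) y)"
  using assms by (simp add: linext_sum finite_support_scale linext_scale)

lemma linext_cong: "(\<And>x. f x \<noteq> 0 \<Longrightarrow> F x = G x) \<Longrightarrow> linext F f = linext G f"
  unfolding linext_def by simp

lemma linext_zero: "linext (\<lambda>x y. 0) f = (\<lambda>y. 0)"
  unfolding linext_def by simp

lemma linext_linext:
  assumes "finite_support f" "\<And>x. f x \<noteq> 0 \<Longrightarrow> finite_support (F x)"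
  shows "linext G (linext F f) = linext (\<lambda>x. linext G (F x)) f"
  unfolding linext_def[of F f] linext_def[of "\<lambda>x. linext G (F x)" f]
  using assms unfolding finite_support_def by (intro linext_sum_scale) (auto simp: finite_support_def)

definition rank_in :: "'a::linorder set \<Rightarrow> 'a \<Rightarrow> nat" where
  "rank_in T a = card {m \<in> T. m < a}"

lemma rank_in_nth:
  assumes "finite T" "j < length (sorted_list_of_set T)"
  shows "rank_in T (sorted_list_of_set T ! j) = j"
proof -
  let ?cs = "sorted_list_of_set T"
  have sorted: "sorted_wrt (<) ?cs"
    by (rule strict_sorted_list_of_set)
  have "{m \<in> T. m < ?cs ! j} = (nth ?cs) ` {..<j}"
  proof
    show "{m \<in> T. m < ?cs ! j} \<subseteq> (nth ?cs) ` {..<j}"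
    proof
      fix m assume m: "m \<in> {m \<in> T. m < ?cs ! j}"
      then have "m \<in> set ?cs"
        using assms(1) by simp
      then obtain i where i: "i < length ?cs" "?cs ! i = m"
        by (auto simp: in_set_conv_nth)
      have "i < j"
        using sorted_wrt_nth_less[OF sorted, of j i] i m assms(2) by (cases "i < j"; cases "i = j") auto
      then show "m \<in> (nth ?cs) ` {..<j}"
        using i by auto
    qed
    show "(nth ?cs) ` {..<j} \<subseteq> {m \<in> T. m < ?cs ! j}"
    proof
      fix m assume "m \<in> (nth ?cs) ` {..<j}"
      then obtain i where i: "i < j" "m = ?cs ! i"
        by auto
      have "m \<in> set ?cs"
        using i assms(2) by auto
      moreover have "m < ?cs ! j"
        using sorted_wrt_nth_less[OF sorted i(1) assms(2)] i by simp
      ultimately show "m \<in> {m \<in> T. m < ?cs ! j}"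
        using assms(1) by simp
    qed
  qed
  moreover have "card ((nth ?cs) ` {..<j}) = j"
    using assms(2) by (subst card_image) (auto intro!: inj_on_nth)
  ultimately show ?thesis
    unfolding rank_in_def by simp
qed

lemma sum_sorted_list_of_set_nth:
  assumes "finite T"
  shows "(\<Sum>j<length (sorted_list_of_set T). g (sorted_list_of_set T ! j) j) = (\<Sum>a\<in>T. g a (rank_in T a))"
proof -
  let ?cs = "sorted_list_of_set T"
  have "(\<Sum>j<length ?cs. g (?cs ! j) j) = (\<Sum>j<length ?cs. g (?cs ! j) (rank_in T (?cs ! j)))"
    using rank_in_nth[OF assms] by (intro sum.cong) auto
  also have "\<dots> = (\<Sum>a\<in>T. g a (rank_in T a))"
    using sum.reindex_bij_betw[OF bij_betw_nth[of ?cs "{..<length ?cs}" T], of "\<lambda>a. g a (rank_in T a)"]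
      assms by simp
  finally show ?thesis .
qed

lemma rank_in_Diff_less:
  assumes "finite T" "a \<in> T" "a < b"
  shows "rank_in (T - {a}) b + 1 = rank_in T b"
proof -
  let ?B = "{m \<in> T. m < b}"
  have "{m \<in> T - {a}. m < b} = ?B - {a}" "a \<in> ?B" "finite ?B"
    using assms by auto
  moreover have "card ?B > 0"
    using \<open>a \<in> ?B\<close> \<open>finite ?B\<close> card_gt_0_iff by blast
  ultimately show ?thesis
    unfolding rank_in_def by (simp add: card_Diff_singleton)
qed

lemma rank_in_Diff_greater: "b < a \<Longrightarrow> rank_in (T - {a}) b = rank_in T b"
  unfolding rank_in_def by (rule arg_cong[where f = card]) auto

text \<open>Removing \<open>a\<close> then \<open>b\<close> costs one transposition more or less than removing \<open>b\<close> then \<open>a\<close>: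
  this is the sign that makes \<open>\<partial> \<circ> \<partial>\<close> vanish.\<close>

lemma rank_in_swap_sign:
  assumes "finite T" "a \<in> T" "b \<in> T" "a \<noteq> b"
  shows "(-1::int) ^ (rank_in T b + rank_in (T - {b}) a) = - ((-1) ^ (rank_in T a + rank_in (T - {a}) b))"
proof (cases "a < b")
  case True
  then have "rank_in T b + rank_in (T - {b}) a = Suc (rank_in T a + rank_in (T - {a}) b)"
    using rank_in_Diff_less[OF assms(1,2) True] rank_in_Diff_greater[OF True] by simp
  then show ?thesis by simp
next
  case False
  then have "b < a" using assms by auto
  then have "rank_in T a + rank_in (T - {a}) b = Suc (rank_in T b + rank_in (T - {b}) a)"
    using rank_in_Diff_less[OF assms(1,3) \<open>b < a\<close>] rank_in_Diff_greater[OF \<open>b < a\<close>] by simp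
  then show ?thesis by simp
qed

lemma sum_offdiag_antisym:
  assumes "finite T" "\<And>a b. a \<in> T \<Longrightarrow> b \<in> T \<Longrightarrow> a \<noteq> b \<Longrightarrow> H b a = - H a b"
  shows "(\<Sum>a\<in>T. \<Sum>b\<in>T - {a}. H a b) = (0::int)"
proof -
  let ?P = "{p \<in> T \<times> T. fst p \<noteq> snd p}"
  have sum_P: "(\<Sum>a\<in>T. \<Sum>b\<in>T - {a}. H a b) = (\<Sum>p\<in>?P. H (fst p) (snd p))"
  proof -
    have "(SIGMA a:T. T - {a}) = ?P" by auto
    then show ?thesis
      using assms(1) by (subst sum.Sigma) (auto simp: split_beta)
  qed
  have "bij_betw (\<lambda>p. (snd p, fst p)) ?P ?P"
    by (rule bij_betwI[where g = "\<lambda>p. (snd p, fst p)"]) auto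
  then have "(\<Sum>p\<in>?P. H (fst p) (snd p)) = (\<Sum>p\<in>?P. H (snd p) (fst p))"
    using sum.reindex_bij_betw[of "\<lambda>p. (snd p, fst p)" ?P ?P "\<lambda>p. H (fst p) (snd p)"] by simp
  also have "\<dots> = (\<Sum>p\<in>?P. - H (fst p) (snd p))"
  proof (rule sum.cong[OF refl])
    fix p assume "p \<in> ?P"
    then show "H (snd p) (fst p) = - H (fst p) (snd p)"
      using assms(2)[of "fst p" "snd p"] by auto
  qed
  also have "\<dots> = - (\<Sum>p\<in>?P. H (fst p) (snd p))"
    by (rule sum_negf)
  finally show ?thesis
    using sum_P by simp
qed

section \<open>The boundary map\<close>

definition ext_sign :: "nat \<Rightarrow> int" where
  "ext_sign c = (if c = 1 then -1 else 1)"

lemma ext_sign_signs: "ext_sign c \<in> {-1, 1}"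
  unfolding ext_sign_def by simp

text \<open>Multiplying the new sign by \<open>\<tau> = -1\<close> swaps the terms \<open>c = 1, 2\<close>, which carry opposite signs.\<close>

lemma sum_ext_sign_twist:
  assumes "\<tau> \<in> {-1, 1}"
  shows "(\<Sum>c\<in>{1::nat, 2}. (-1::int) ^ (n + c + 1) * (e * \<tau> * T (ext_sign c * \<tau>)))
       = e * (\<Sum>c\<in>{1::nat, 2}. (-1) ^ (n + c + 1) * T (ext_sign c))"
  using assms unfolding ext_sign_def by (auto simp: algebra_simps)

lemma sum_sign_rearrange:
  "(-1::int) ^ (p + 1 + c + 1) * ((-1) ^ (q + 1 + c' + 1) * x) = (-1) ^ (p + q) * ((-1) ^ (c + c') * x)"
  by (simp add: power_add)

context simple_reflections
begin

lemma bd_cell_eq_sum: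
  "bd_cell l C (S, w, \<eta>) = (\<lambda>y. \<Sum>a\<in>{..<l} - S. \<Sum>c\<in>{1::nat, 2}.
      (-1) ^ (rank_in ({..<l} - S) a + 1 + c + 1) * tens l C (insert a S) w (\<eta>(a := ext_sign c)) y)"
  unfolding bd_cell_def ext_sign_def Let_def
  using sum_sorted_list_of_set_nth[of "{..<l} - S" "\<lambda>a j. \<Sum>c\<in>{1::nat, 2}.
      (-1) ^ ((j + 1) + c + 1) * tens l C (insert a S) w (\<eta>(a := if c = 1 then -1 else 1)) _"]
  by simp

end

context cartan
begin

lemma tens_eq_single:
  "tens l C S w \<eta> = single (S, coset_rep l C S w, snd (wsact l C S (coset_part l C S w) \<eta>))
    (fst (wsact l C S (coset_part l C S w) \<eta>))"
  unfolding tens_def single_def prod.case_eq_if by simp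

lemma tens_mult:
  assumes S: "S \<subseteq> {..<l}" and w: "w \<in> weyl l C" and v: "v \<in> weyl_sub l C S" and \<eta>: "\<eta> \<in> dset S"
  shows "tens l C S (w * v) \<eta> = (\<lambda>y. fst (wsact l C S v \<eta>) * tens l C S w (snd (wsact l C S v \<eta>)) y)"
proof -
  define u where "u = coset_rep l C S w"
  define p where "p = coset_part l C S w"
  have u: "min_rep l C S u" and p: "p \<in> weyl_sub l C S" and w_eq: "w = u * p"
    using coset_decomp[OF S w] unfolding u_def p_def by auto
  have pv: "p * v \<in> weyl_sub l C S"
    using p v weyl_sub_mult by blast
  have "w * v = u * (p * v)"
    unfolding w_eq using u p v weyl_sub_carrier unfolding min_rep_def by (meson assoc_mult_mat)
  then have rep: "coset_rep l C S (w * v) = u" and part: "coset_part l C S (w * v) = p * v"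
    using coset_rep_eq[OF S u pv] coset_part_eq[OF S u pv] by simp_all
  show ?thesis
    unfolding tens_eq_single[of S "w * v"] tens_eq_single[of S w] rep part wsact_mult[OF S p v \<eta>]
      u_def[symmetric] p_def[symmetric]
    by (simp add: single_def fun_eq_iff)
qed

lemma tens_in_basis:
  assumes S: "S \<subseteq> {..<l}" and w: "w \<in> weyl l C" and \<eta>: "\<eta> \<in> dset S"
  obtains x e where "tens l C S w \<eta> = single x e" "x \<in> basis l C (card S)" "e \<in> {-1, 1}"
proof -
  have "min_rep l C S (coset_rep l C S w)" "coset_part l C S w \<in> weyl_sub l C S"
    using coset_decomp[OF S w] by auto
  then show ?thesis
    using that tens_eq_single[of S w \<eta>] wsact_dset[OF S _ \<eta>] S unfolding basis_def by blast
qed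

lemma finite_support_tens:
  "S \<subseteq> {..<l} \<Longrightarrow> w \<in> weyl l C \<Longrightarrow> \<eta> \<in> dset S \<Longrightarrow> finite_support (tens l C S w \<eta>)"
  by (metis tens_in_basis finite_support_single)

lemma wmult_tens:
  assumes S: "S \<subseteq> {..<l}" and g: "g \<in> weyl l C" and w: "w \<in> weyl l C" and \<eta>: "\<eta> \<in> dset S"
  shows "wmult l C g (tens l C S w \<eta>) = tens l C S (g * w) \<eta>"
proof -
  define u where "u = coset_rep l C S w"
  define p where "p = coset_part l C S w"
  have u: "min_rep l C S u" and p: "p \<in> weyl_sub l C S" and w_eq: "w = u * p"
    using coset_decomp[OF S w] unfolding u_def p_def by auto
  have gu: "g * u \<in> weyl l C"
    using g u weyl_sub_mult unfolding min_rep_def by blast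
  have "g * w = (g * u) * p"
    unfolding w_eq using g u p weyl_sub_carrier unfolding min_rep_def by (metis assoc_mult_mat)
  then show ?thesis
    unfolding wmult_def tens_eq_single[of S w] linext_single u_def[symmetric] p_def[symmetric]
    using tens_mult[OF S gu p \<eta>] by simp
qed

lemma wsact_fun_upd:
  assumes S: "S \<subseteq> {..<l}" and a: "a < l" "a \<notin> S" and p: "p \<in> weyl_sub l C S" and \<eta>: "\<eta> \<in> dset S"
  obtains \<tau> where "\<tau> \<in> {-1, 1}"
    "\<And>\<epsilon>. \<epsilon> \<in> {-1, 1} \<Longrightarrow> wsact l C (insert a S) p (\<eta>(a := \<epsilon>))
      = (fst (wsact l C S p \<eta>) * \<tau>, (snd (wsact l C S p \<eta>))(a := \<epsilon> * \<tau>))"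
proof -
  obtain p' where p': "p' \<in> weyl_sub l C S" "p * p' = 1\<^sub>m l"
    using weyl_sub_inverse[OF p S] by blast
  have S': "insert a S \<subseteq> {..<l}" and p_ins: "p \<in> weyl_sub l C (insert a S)"
    using S a p weyl_sub_mono[of S "insert a S"] by auto
  show thesis
  proof (rule that)
    show "lattice_char S \<eta> (\<lambda>k. p' $$ (k, a)) \<in> {-1, 1}"
      using lattice_char_signs[OF \<eta>] .
    fix \<epsilon> :: int assume "\<epsilon> \<in> {-1, 1}"
    then show "wsact l C (insert a S) p (\<eta>(a := \<epsilon>)) = (fst (wsact l C S p \<eta>) * lattice_char S \<eta> (\<lambda>k. p' $$ (k, a)),
        (snd (wsact l C S p \<eta>))(a := \<epsilon> * lattice_char S \<eta> (\<lambda>k. p' $$ (k, a))))"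
      using wsact_eq[OF S' p_ins p'(2) weyl_sub_carrier[OF p'(1)] fun_upd_in_dset[OF \<eta>]]
        wsact_eq[OF S p p'(2) weyl_sub_carrier[OF p'(1)] \<eta>] sign_factor_insert[OF S a p'(1) \<eta>]
        sign_transform_insert[OF S a p'(1)] by simp
  qed
qed

lemma sum_ext_sign_tens_mult:
  assumes S: "S \<subseteq> {..<l}" and a: "a < l" "a \<notin> S" and u: "u \<in> weyl l C" and p: "p \<in> weyl_sub l C S"
    and \<eta>: "\<eta> \<in> dset S"
  shows "(\<Sum>c\<in>{1::nat, 2}. (-1) ^ (n + c + 1) * tens l C (insert a S) (u * p) (\<eta>(a := ext_sign c)) y)
    = fst (wsact l C S p \<eta>) * (\<Sum>c\<in>{1::nat, 2}. (-1) ^ (n + c + 1)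
        * tens l C (insert a S) u ((snd (wsact l C S p \<eta>))(a := ext_sign c)) y)"
proof -
  define e where "e = fst (wsact l C S p \<eta>)"
  define \<eta>' where "\<eta>' = snd (wsact l C S p \<eta>)"
  have S': "insert a S \<subseteq> {..<l}" and p': "p \<in> weyl_sub l C (insert a S)"
    using a S p weyl_sub_mono[of S "insert a S"] by auto
  obtain \<tau> where \<tau>: "\<tau> \<in> {-1, 1}"
    and act: "\<And>\<epsilon>. \<epsilon> \<in> {-1, 1} \<Longrightarrow> wsact l C (insert a S) p (\<eta>(a := \<epsilon>)) = (e * \<tau>, \<eta>'(a := \<epsilon> * \<tau>))"
    using wsact_fun_upd[OF S a p \<eta>] unfolding e_def \<eta>'_def by blast
  have "tens l C (insert a S) (u * p) (\<eta>(a := ext_sign c)) y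
      = e * \<tau> * tens l C (insert a S) u (\<eta>'(a := ext_sign c * \<tau>)) y" for c
    using tens_mult[OF S' u p' fun_upd_in_dset[OF \<eta> ext_sign_signs]] act[OF ext_sign_signs] by simp
  then have "(\<Sum>c\<in>{1::nat, 2}. (-1) ^ (n + c + 1) * tens l C (insert a S) (u * p) (\<eta>(a := ext_sign c)) y)
      = (\<Sum>c\<in>{1::nat, 2}. (-1) ^ (n + c + 1) * (e * \<tau> * tens l C (insert a S) u (\<eta>'(a := ext_sign c * \<tau>)) y))"
    by (intro sum.cong refl) simp
  also have "\<dots> = e * (\<Sum>c\<in>{1::nat, 2}. (-1) ^ (n + c + 1) * tens l C (insert a S) u (\<eta>'(a := ext_sign c)) y)"
    by (rule sum_ext_sign_twist[OF \<tau>])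
  finally show ?thesis
    unfolding e_def \<eta>'_def .
qed

lemma bd_tens:
  assumes S: "S \<subseteq> {..<l}" and w: "w \<in> weyl l C" and \<eta>: "\<eta> \<in> dset S"
  shows "bd l C (tens l C S w \<eta>) = bd_cell l C (S, w, \<eta>)"
proof
  fix y
  define u where "u = coset_rep l C S w"
  define p where "p = coset_part l C S w"
  have u: "u \<in> weyl l C" and p: "p \<in> weyl_sub l C S" and w_eq: "w = u * p"
    using coset_decomp[OF S w] unfolding u_def p_def min_rep_def by auto
  define T where "T = {..<l} - S"
  have "bd_cell l C (S, w, \<eta>) y = (\<Sum>a\<in>T. fst (wsact l C S p \<eta>) * (\<Sum>c\<in>{1::nat, 2}.
      (-1) ^ (rank_in T a + 1 + c + 1) * tens l C (insert a S) u ((snd (wsact l C S p \<eta>))(a := ext_sign c)) y))"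
    unfolding bd_cell_eq_sum T_def[symmetric] w_eq
    by (rule sum.cong[OF refl], rule sum_ext_sign_tens_mult[OF S _ _ u p \<eta>]) (auto simp: T_def)
  also have "\<dots> = fst (wsact l C S p \<eta>) * bd_cell l C (S, u, snd (wsact l C S p \<eta>)) y"
    unfolding bd_cell_eq_sum T_def[symmetric] by (rule sum_distrib_left[symmetric])
  also have "\<dots> = bd l C (tens l C S w \<eta>) y"
    unfolding bd_def tens_eq_single linext_single u_def p_def ..
  finally show "bd l C (tens l C S w \<eta>) y = bd_cell l C (S, w, \<eta>) y" ..
qed

lemma linext_bd_cell:
  assumes S: "S \<subseteq> {..<l}" and w: "w \<in> weyl l C" and \<eta>: "\<eta> \<in> dset S"
  shows "linext G (bd_cell l C (S, w, \<eta>)) = (\<lambda>z. \<Sum>a\<in>{..<l} - S. \<Sum>c\<in>{1::nat, 2}.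
      (-1) ^ (rank_in ({..<l} - S) a + 1 + c + 1) * linext G (tens l C (insert a S) w (\<eta>(a := ext_sign c))) z)"
proof -
  have fs: "finite_support (tens l C (insert a S) w (\<eta>(a := ext_sign c)))" if "a \<in> {..<l} - S" for a c
    using that S by (intro finite_support_tens w fun_upd_in_dset[OF \<eta> ext_sign_signs]) auto
  then have "finite_support (\<lambda>y. \<Sum>c\<in>{1::nat, 2}. (-1) ^ (rank_in ({..<l} - S) a + 1 + c + 1)
      * tens l C (insert a S) w (\<eta>(a := ext_sign c)) y)" if "a \<in> {..<l} - S" for a
    using that by (intro finite_support_sum finite_support_scale) auto
  then have "linext G (bd_cell l C (S, w, \<eta>)) = (\<lambda>z. \<Sum>a\<in>{..<l} - S. linext G (\<lambda>y. \<Sum>c\<in>{1::nat, 2}.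
      (-1) ^ (rank_in ({..<l} - S) a + 1 + c + 1) * tens l C (insert a S) w (\<eta>(a := ext_sign c)) y) z)"
    unfolding bd_cell_eq_sum by (intro linext_sum) auto
  also have "\<dots> = (\<lambda>z. \<Sum>a\<in>{..<l} - S. \<Sum>c\<in>{1::nat, 2}.
      (-1) ^ (rank_in ({..<l} - S) a + 1 + c + 1) * linext G (tens l C (insert a S) w (\<eta>(a := ext_sign c))) z)"
    using fs by (intro ext sum.cong refl fun_cong[OF linext_sum_scale]) auto
  finally show ?thesis .
qed

lemma finite_support_bd_cell:
  assumes S: "S \<subseteq> {..<l}" and w: "w \<in> weyl l C" and \<eta>: "\<eta> \<in> dset S"
  shows "finite_support (bd_cell l C (S, w, \<eta>))"
  unfolding bd_cell_eq_sum
  using S by (intro finite_support_sum finite_support_scale finite_support_tens w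
      fun_upd_in_dset[OF \<eta> ext_sign_signs]) auto

lemma wmult_bd_cell:
  assumes S: "S \<subseteq> {..<l}" and g: "g \<in> weyl l C" and w: "w \<in> weyl l C" and \<eta>: "\<eta> \<in> dset S"
  shows "wmult l C g (bd_cell l C (S, w, \<eta>)) = bd_cell l C (S, g * w, \<eta>)"
proof -
  have "wmult l C g (bd_cell l C (S, w, \<eta>)) = (\<lambda>z. \<Sum>a\<in>{..<l} - S. \<Sum>c\<in>{1::nat, 2}.
      (-1) ^ (rank_in ({..<l} - S) a + 1 + c + 1) * wmult l C g (tens l C (insert a S) w (\<eta>(a := ext_sign c))) z)"
    unfolding wmult_def by (rule linext_bd_cell[OF S w \<eta>])
  also have "\<dots> = bd_cell l C (S, g * w, \<eta>)"
    unfolding bd_cell_eq_sum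
  proof (intro ext sum.cong refl)
    fix z a c assume "a \<in> {..<l} - S"
    then show "(-1) ^ (rank_in ({..<l} - S) a + 1 + c + 1) * wmult l C g (tens l C (insert a S) w (\<eta>(a := ext_sign c))) z
        = (-1) ^ (rank_in ({..<l} - S) a + 1 + c + 1) * tens l C (insert a S) (g * w) (\<eta>(a := ext_sign c)) z"
      using S wmult_tens[OF _ g w fun_upd_in_dset[OF \<eta> ext_sign_signs]] by simp
  qed
  finally show ?thesis .
qed

lemma bd_bd_cell:
  assumes S: "S \<subseteq> {..<l}" and w: "w \<in> weyl l C" and \<eta>: "\<eta> \<in> dset S"
  shows "bd l C (bd_cell l C (S, w, \<eta>)) = (\<lambda>_. 0)"
proof
  fix z
  define T where "T = {..<l} - S"
  have fT: "finite T" unfolding T_def by simp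
  define G where "G a b c c' = tens l C (insert b (insert a S)) w ((\<eta>(a := ext_sign c))(b := ext_sign c')) z"
    for a b c c'
  define H where "H a b = (-1::int) ^ (rank_in T a + rank_in (T - {a}) b)
      * (\<Sum>c\<in>{1::nat, 2}. \<Sum>c'\<in>{1::nat, 2}. (-1) ^ (c + c') * G a b c c')" for a b
  have "bd l C (bd_cell l C (S, w, \<eta>)) z
      = (\<Sum>a\<in>T. \<Sum>c\<in>{1::nat, 2}. (-1) ^ (rank_in T a + 1 + c + 1) * bd l C (tens l C (insert a S) w (\<eta>(a := ext_sign c))) z)"
    unfolding bd_def linext_bd_cell[OF assms] T_def ..
  also have "\<dots> = (\<Sum>a\<in>T. \<Sum>b\<in>T - {a}. H a b)"
  proof (rule sum.cong[OF refl])
    fix a assume a: "a \<in> T"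
    have "insert a S \<subseteq> {..<l}" "{..<l} - insert a S = T - {a}"
      using a S unfolding T_def by auto
    moreover have "\<eta>(a := ext_sign c) \<in> dset (insert a S)" for c
      using fun_upd_in_dset[OF \<eta> ext_sign_signs] .
    ultimately have "(\<Sum>c\<in>{1::nat, 2}. (-1) ^ (rank_in T a + 1 + c + 1) * bd l C (tens l C (insert a S) w (\<eta>(a := ext_sign c))) z)
      = (\<Sum>c\<in>{1::nat, 2}. (-1) ^ (rank_in T a + 1 + c + 1) * (\<Sum>b\<in>T - {a}. \<Sum>c'\<in>{1::nat, 2}.
          (-1) ^ (rank_in (T - {a}) b + 1 + c' + 1) * G a b c c'))"
      unfolding G_def using bd_tens w by (simp add: bd_cell_eq_sum)
    also have "\<dots> = (\<Sum>b\<in>T - {a}. H a b)"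
      unfolding H_def by (simp only: sum_distrib_left sum_sign_rearrange) (subst sum.swap, rule refl)
    finally show "(\<Sum>c\<in>{1::nat, 2}. (-1) ^ (rank_in T a + 1 + c + 1) * bd l C (tens l C (insert a S) w (\<eta>(a := ext_sign c))) z)
        = (\<Sum>b\<in>T - {a}. H a b)" .
  qed
  also have "\<dots> = 0"
  proof (rule sum_offdiag_antisym[OF fT])
    fix a b assume ab: "a \<in> T" "b \<in> T" "a \<noteq> b"
    have "G b a c c' = G a b c' c" for c c'
      unfolding G_def using ab(3) by (simp add: insert_commute fun_upd_twist)
    then have "(\<Sum>c\<in>{1::nat, 2}. \<Sum>c'\<in>{1::nat, 2}. (-1::int) ^ (c + c') * G b a c c')
        = (\<Sum>c\<in>{1::nat, 2}. \<Sum>c'\<in>{1::nat, 2}. (-1) ^ (c + c') * G a b c c')"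
      by (subst sum.swap) (simp add: add.commute)
    then show "H b a = - H a b"
      unfolding H_def using rank_in_swap_sign[OF fT ab] by simp
  qed
  finally show "bd l C (bd_cell l C (S, w, \<eta>)) z = 0" .
qed

lemma finite_basis: "finite (basis l C k)"
proof -
  have "basis l C k \<subseteq> Pow {..<l} \<times> (weyl l C \<times> (\<Union>S\<in>Pow {..<l}. dset S))"
    unfolding basis_def min_rep_def by auto
  moreover have "finite (dset S)" if "S \<in> Pow {..<l}" for S
    using that finite_subset[of S "{..<l}"] unfolding dset_def by (intro finite_PiE) auto
  ultimately show ?thesis
    using finite_weyl by (meson finite_SigmaI finite_Pow_iff finite_lessThan finite_UN_I finite_subset)
qed

lemma basisD:
  assumes "(S, u, \<eta>) \<in> basis l C k"
  shows "S \<subseteq> {..<l}" "u \<in> weyl l C" "\<eta> \<in> dset S" "card S = k"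
  using assms unfolding basis_def min_rep_def by auto

lemma Mod_support: "f \<in> Mod l C k \<Longrightarrow> f x \<noteq> 0 \<Longrightarrow> x \<in> basis l C k"
  unfolding Mod_def by blast

lemma Mod_finite_support:
  assumes "f \<in> Mod l C k"
  shows "finite_support f"
proof -
  have "{x. f x \<noteq> 0} \<subseteq> basis l C k"
    using Mod_support[OF assms] by blast
  then show ?thesis
    unfolding finite_support_def using finite_basis by (rule finite_subset)
qed

lemma bd_cell_basis_outside:
  assumes x: "x \<in> basis l C k" and y: "y \<notin> basis l C (Suc k)"
  shows "bd_cell l C x y = 0"
proof -
  obtain S u \<eta> where x_eq: "x = (S, u, \<eta>)"
    by (cases x)
  have S: "S \<subseteq> {..<l}" and u: "u \<in> weyl l C" and \<eta>: "\<eta> \<in> dset S" and card: "card S = k"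
    using basisD x x_eq by auto
  have "tens l C (insert a S) u (\<eta>(a := ext_sign c)) y = 0" if a: "a \<in> {..<l} - S" for a c
  proof -
    have "card (insert a S) = Suc k"
      using a S card finite_subset by fastforce
    moreover have "insert a S \<subseteq> {..<l}"
      using a S by auto
    then obtain x' e where "tens l C (insert a S) u (\<eta>(a := ext_sign c)) = single x' e"
      "x' \<in> basis l C (card (insert a S))"
      using tens_in_basis[OF _ u fun_upd_in_dset[OF \<eta> ext_sign_signs]] by metis
    ultimately show ?thesis
      using y by (auto simp: single_def)
  qed
  then show ?thesis
    unfolding x_eq bd_cell_eq_sum by simp
qed

lemma finite_support_bd_cell_basis: "x \<in> basis l C k \<Longrightarrow> finite_support (bd_cell l C x)"
  using basisD finite_support_bd_cell by (cases x) auto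

lemma bd_in_Mod:
  assumes f: "f \<in> Mod l C k"
  shows "bd l C f \<in> Mod l C (Suc k)"
  unfolding Mod_def
proof (intro CollectI allI impI)
  fix y assume y: "y \<notin> basis l C (Suc k)"
  have "bd_cell l C x y = 0" if "f x \<noteq> 0" for x
    using bd_cell_basis_outside[OF Mod_support[OF f that] y] .
  then show "bd l C f y = 0"
    unfolding bd_def linext_def by simp
qed

lemma bd_linear:
  "f \<in> Mod l C k \<Longrightarrow> f' \<in> Mod l C k \<Longrightarrow> bd l C (\<lambda>x. a * f x + b * f' x) = (\<lambda>y. a * bd l C f y + b * bd l C f' y)"
  unfolding bd_def by (intro linext_lin Mod_finite_support)

lemma bd_wmult:
  assumes g: "g \<in> weyl l C" and f: "f \<in> Mod l C k"
  shows "bd l C (wmult l C g f) = wmult l C g (bd l C f)"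
proof -
  let ?F = "\<lambda>(S, u, \<eta>). tens l C S (g * u) \<eta>"
  have cell: "finite_support (?F x) \<and> bd l C (?F x) = wmult l C g (bd_cell l C x)" if "f x \<noteq> 0" for x
  proof (cases x)
    case (fields S u \<eta>)
    then have S: "S \<subseteq> {..<l}" and u: "u \<in> weyl l C" and \<eta>: "\<eta> \<in> dset S"
      using basisD Mod_support[OF f that] by blast+
    have "g * u \<in> weyl l C"
      using g u weyl_sub_mult by blast
    then show ?thesis
      using fields finite_support_tens[OF S _ \<eta>] bd_tens[OF S _ \<eta>] wmult_bd_cell[OF S g u \<eta>] by simp
  qed
  then have "bd l C (wmult l C g f) = linext (\<lambda>x. bd l C (?F x)) f"
    unfolding bd_def wmult_def using Mod_finite_support[OF f] by (intro linext_linext) blast+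
  also have "\<dots> = linext (\<lambda>x. wmult l C g (bd_cell l C x)) f"
    using cell by (intro linext_cong) blast
  also have "\<dots> = wmult l C g (bd l C f)"
    unfolding bd_def wmult_def using Mod_finite_support[OF f] Mod_support[OF f]
    by (intro linext_linext[symmetric] finite_support_bd_cell_basis)
  finally show ?thesis .
qed

lemma bd_bd: "f \<in> Mod l C k \<Longrightarrow> bd l C (bd l C f) = (\<lambda>_. 0)"
proof -
  assume f: "f \<in> Mod l C k"
  have "bd l C (bd l C f) = linext (\<lambda>x. bd l C (bd_cell l C x)) f"
    unfolding bd_def using Mod_finite_support[OF f] Mod_support[OF f]
    by (intro linext_linext finite_support_bd_cell_basis)
  also have "\<dots> = linext (\<lambda>x y. 0) f"
    using Mod_support[OF f] basisD bd_bd_cell by (intro linext_cong) (metis prod_cases3)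
  finally show ?thesis
    by (simp add: linext_zero)
qed

end

theorem proposition3p3p2:
  fixes l :: nat and C :: "nat \<Rightarrow> nat \<Rightarrow> int"
  assumes "cartan_finite_type l C"
  shows "\<forall>k. (\<forall>f \<in> Mod l C k. bd l C f \<in> Mod l C (Suc k))
           \<and> (\<forall>f \<in> Mod l C k. \<forall>f' \<in> Mod l C k. \<forall>a b :: int.
                 bd l C (\<lambda>x. a * f x + b * f' x) = (\<lambda>y. a * bd l C f y + b * bd l C f' y))
           \<and> (\<forall>g \<in> weyl l C. \<forall>f \<in> Mod l C k. bd l C (wmult l C g f) = wmult l C g (bd l C f))
           \<and> (\<forall>f \<in> Mod l C k. bd l C (bd l C f) = (\<lambda>_. 0))"
proof -
  interpret cartan l C
    by unfold_locales (rule assms)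
  show ?thesis
    using bd_in_Mod bd_linear bd_wmult bd_bd by blast
qed

end
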